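(* Let $R$ be a commutative noetherian ring, $\mathfrak{a}$ an ideal contained in the Jacobson radical of $R$, and $M$ a finitely generated $R$-module. The maps $f\colon C_{\mathfrak{a}}(M)\to\operatorname{Hom}_R(\widehat{R}^{\mathfrak{a}},M)$, $f(m)(r)=rm$, and $e\colon\operatorname{Hom}_R(\widehat{R}^{\mathfrak{a}},M)\to C_{\mathfrak{a}}(M)$, $e(\varphi)=\varphi(1)$, are well defined and are mutually inverse isomorphisms. In particular, $\operatorname{Hom}_R(\widehat{R}^{\mathfrak{a}},M)$ is a finitely generated $R$-module.
   Context: $\widehat{R}^{\mathfrak{a}}$ is the $\mathfrak{a}$-adic completion of $R$. A module $N$ is $\mathfrak{a}$-adically complete if $N\to\varprojlim_n N/\mathfrak{a}^nN$ is an isomorphism. $C_{\mathfrak{a}}(M)$ denotes the unique maximal $\mathfrak{a}$-adically complete $R$-submodule of $M$ (it exists and is naturally an $\widehat{R}^{\mathfrak{a}}$-module, so $f$ makes sense). *)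

theory Defs
  imports Complex_Main
begin

definition is_ideal :: "'r::comm_ring_1 set \<Rightarrow> bool" where
  "is_ideal I \<longleftrightarrow> module.subspace ((*)::'r \<Rightarrow> 'r \<Rightarrow> 'r) I"

definition ideal_gen :: "'r::comm_ring_1 set \<Rightarrow> 'r set" where
  "ideal_gen S = module.span ((*)::'r \<Rightarrow> 'r \<Rightarrow> 'r) S"

definition noetherian_ring :: "'r::comm_ring_1 itself \<Rightarrow> bool" where
  "noetherian_ring _ \<longleftrightarrow> (\<forall>I::'r set. is_ideal I \<longrightarrow> (\<exists>S. finite S \<and> I = ideal_gen S))"

definition maximal_ideal :: "'r::comm_ring_1 set \<Rightarrow> bool" where
  "maximal_ideal m \<longleftrightarrow> is_ideal m \<and> m \<noteq> UNIV \<and>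
     (\<forall>J. is_ideal J \<and> m \<subseteq> J \<longrightarrow> J = m \<or> J = UNIV)"

definition jacobson_radical :: "'r::comm_ring_1 set" where
  "jacobson_radical = \<Inter> {m. maximal_ideal m}"

definition ideal_pow :: "'r::comm_ring_1 set \<Rightarrow> nat \<Rightarrow> 'r set" where
  "ideal_pow a n = ideal_gen {prod_list xs | xs. length xs = n \<and> set xs \<subseteq> a}"

definition fin_gen_module :: "('r::comm_ring_1 \<Rightarrow> 'm::ab_group_add \<Rightarrow> 'm) \<Rightarrow> bool" where
  "fin_gen_module scale \<longleftrightarrow> (\<exists>S. finite S \<and> module.span scale S = UNIV)"

definition adic_sub :: "('r::comm_ring_1 \<Rightarrow> 'm::ab_group_add \<Rightarrow> 'm) \<Rightarrow> 'r set \<Rightarrow> nat \<Rightarrow> 'm set \<Rightarrow> 'm set" where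
  "adic_sub scale a n N = module.span scale {scale r x | r x. r \<in> ideal_pow a n \<and> x \<in> N}"

text \<open>The inverse limit lim_n N / a^n N, realised as compatible sequences of cosets.\<close>
definition adic_lim :: "('r::comm_ring_1 \<Rightarrow> 'm::ab_group_add \<Rightarrow> 'm) \<Rightarrow> 'r set \<Rightarrow> 'm set \<Rightarrow> (nat \<Rightarrow> 'm set) set" where
  "adic_lim scale a N = {c. \<forall>n. (\<exists>x\<in>N. c n = (+) x ` adic_sub scale a n N) \<and> c (Suc n) \<subseteq> c n}"

definition adically_complete :: "('r::comm_ring_1 \<Rightarrow> 'm::ab_group_add \<Rightarrow> 'm) \<Rightarrow> 'r set \<Rightarrow> 'm set \<Rightarrow> bool" where
  "adically_complete scale a N \<longleftrightarrow> module.subspace scale N \<and>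
     bij_betw (\<lambda>x n. (+) x ` adic_sub scale a n N) N (adic_lim scale a N)"

definition max_complete :: "('r::comm_ring_1 \<Rightarrow> 'm::ab_group_add \<Rightarrow> 'm) \<Rightarrow> 'r set \<Rightarrow> 'm set" where
  "max_complete scale a = (THE N. adically_complete scale a N \<and>
     (\<forall>N'. adically_complete scale a N' \<longrightarrow> N' \<subseteq> N))"

definition completion :: "'r::comm_ring_1 set \<Rightarrow> (nat \<Rightarrow> 'r set) set" where
  "completion a = adic_lim ((*)::'r \<Rightarrow> 'r \<Rightarrow> 'r) a UNIV"

definition comp_add :: "(nat \<Rightarrow> 'r::comm_ring_1 set) \<Rightarrow> (nat \<Rightarrow> 'r set) \<Rightarrow> (nat \<Rightarrow> 'r set)" where
  "comp_add c d = (\<lambda>n. {x + y | x y. x \<in> c n \<and> y \<in> d n})"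

definition comp_scale :: "'r::comm_ring_1 set \<Rightarrow> 'r \<Rightarrow> (nat \<Rightarrow> 'r set) \<Rightarrow> (nat \<Rightarrow> 'r set)" where
  "comp_scale a r c = (\<lambda>n. {r * x + z | x z. x \<in> c n \<and> z \<in> adic_sub (*) a n UNIV})"

definition comp_one :: "'r::comm_ring_1 set \<Rightarrow> (nat \<Rightarrow> 'r set)" where
  "comp_one a = (\<lambda>n. (+) 1 ` adic_sub (*) a n UNIV)"

text \<open>Hom_R(R^a, M), as extensional R-linear maps (value 0 off the completion).\<close>
definition hom_completion :: "('r::comm_ring_1 \<Rightarrow> 'm::ab_group_add \<Rightarrow> 'm) \<Rightarrow> 'r set \<Rightarrow> ((nat \<Rightarrow> 'r set) \<Rightarrow> 'm) set" where
  "hom_completion scale a = {\<phi>.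
     (\<forall>c\<in>completion a. \<forall>d\<in>completion a. \<phi> (comp_add c d) = \<phi> c + \<phi> d) \<and>
     (\<forall>r. \<forall>c\<in>completion a. \<phi> (comp_scale a r c) = scale r (\<phi> c)) \<and>
     (\<forall>c. c \<notin> completion a \<longrightarrow> \<phi> c = 0)}"

text \<open>The natural action of the completion on an a-adically complete submodule N:
  c . m = lim r_n m, where r_n represents c modulo a^n.\<close>
definition hat_act :: "('r::comm_ring_1 \<Rightarrow> 'm::ab_group_add \<Rightarrow> 'm) \<Rightarrow> 'r set \<Rightarrow> 'm set \<Rightarrow> (nat \<Rightarrow> 'r set) \<Rightarrow> 'm \<Rightarrow> 'm" where
  "hat_act scale a N c m = (THE y. y \<in> N \<and> (\<forall>n. \<forall>r\<in>c n. y - scale r m \<in> adic_sub scale a n N))"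

definition map_f :: "('r::comm_ring_1 \<Rightarrow> 'm::ab_group_add \<Rightarrow> 'm) \<Rightarrow> 'r set \<Rightarrow> 'm \<Rightarrow> (nat \<Rightarrow> 'r set) \<Rightarrow> 'm" where
  "map_f scale a m = (\<lambda>c. if c \<in> completion a then hat_act scale a (max_complete scale a) c m else 0)"

definition map_e :: "'r::comm_ring_1 set \<Rightarrow> ((nat \<Rightarrow> 'r set) \<Rightarrow> 'm::ab_group_add) \<Rightarrow> 'm" where
  "map_e a \<phi> = \<phi> (comp_one a)"

end

theory Submission
  imports Defs "HOL-Library.Set_Algebras"
begin

text \<open>Since \<open>a\<close> lies in the Jacobson radical, Nakayama's lemma and the Krull intersection
  theorem make every submodule of \<open>M\<close> \<open>a\<close>-adically separated, so a submodule \<open>N\<close> is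
  complete iff every sequence with \<open>y\<^sub>n\<^sub>+\<^sub>1 - y\<^sub>n \<in> a\<^sup>n N\<close> has a limit in \<open>N\<close>. Finite
  sums of complete submodules are complete and \<open>M\<close> is noetherian, so the union of all
  complete submodules is itself complete: this is \<open>C\<^sub>a(M)\<close>. It is a module over the
  completion via \<open>c \<cdot> m = lim r\<^sub>n m\<close> for representatives \<open>r\<^sub>n\<close> of \<open>c\<close>, and \<open>f m\<close> is
  \<open>c \<mapsto> c \<cdot> m\<close>, with \<open>e (f m) = m\<close>.
  Conversely let \<open>\<phi>\<close> be \<open>R\<close>-linear on the completion. Writing \<open>c - r\<^sub>n\<close> as a combination of
  generators of \<open>a\<^sup>n\<close> with coefficients in the completion gives
  \<open>\<phi> c - r\<^sub>n \<phi> 1 \<in> a\<^sup>n \<cdot> im \<phi>\<close>. By Nakayama \<open>im \<phi> = R \<phi> 1\<close>, and the same congruence shows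
  that \<open>R \<phi> 1\<close> is complete. Hence \<open>\<phi> 1 \<in> C\<^sub>a(M)\<close> and \<open>\<phi> = f (\<phi> 1)\<close>; finite generation of
  the homomorphisms follows from that of the submodule \<open>C\<^sub>a(M)\<close>.\<close>

section \<open>Ideals and their powers\<close>

interpretation R: module "(*) :: 'r::comm_ring_1 \<Rightarrow> 'r \<Rightarrow> 'r"
  by unfold_locales (auto simp: algebra_simps)

declare R.scale_scale[simp del] \<comment> \<open>loops against \<open>mult.assoc\<close> in \<open>algebra_simps\<close>\<close>

lemma is_ideal_iff: "is_ideal I \<longleftrightarrow> R.subspace I"
  by (simp add: is_ideal_def)

lemma ideal_gen_eq: "ideal_gen S = R.span S"
  by (simp add: ideal_gen_def)

lemma is_ideal_ideal_gen [simp]: "is_ideal (ideal_gen S)"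
  by (simp add: is_ideal_iff ideal_gen_eq)

lemma is_ideal_ideal_pow [simp]: "is_ideal (ideal_pow a n)"
  by (simp add: ideal_pow_def)

lemma ideal_zero: "is_ideal I \<Longrightarrow> 0 \<in> I"
  by (simp add: is_ideal_iff R.subspace_0)

lemma ideal_add: "is_ideal I \<Longrightarrow> x \<in> I \<Longrightarrow> y \<in> I \<Longrightarrow> x + y \<in> I"
  by (simp add: is_ideal_iff R.subspace_add)

lemma ideal_diff: "is_ideal I \<Longrightarrow> x \<in> I \<Longrightarrow> y \<in> I \<Longrightarrow> x - y \<in> I"
  by (simp add: is_ideal_iff R.subspace_diff)

lemma ideal_mult_left: "is_ideal I \<Longrightarrow> x \<in> I \<Longrightarrow> c * x \<in> I"
  by (simp add: is_ideal_iff R.subspace_scale)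

lemma ideal_mult_right: "is_ideal I \<Longrightarrow> x \<in> I \<Longrightarrow> x * c \<in> I"
  by (metis ideal_mult_left mult.commute)

lemma ideal_gen_minimal: "S \<subseteq> I \<Longrightarrow> is_ideal I \<Longrightarrow> ideal_gen S \<subseteq> I"
  by (simp add: is_ideal_iff ideal_gen_eq R.span_minimal)

lemma ideal_gen_superset: "S \<subseteq> ideal_gen S"
  by (simp add: ideal_gen_eq R.span_superset)

lemma ideal_gen_of_ideal: "is_ideal I \<Longrightarrow> ideal_gen I = I"
  by (simp add: is_ideal_iff ideal_gen_eq)

lemma ideal_gen_finite:
  "finite G \<Longrightarrow> x \<in> ideal_gen G \<Longrightarrow> \<exists>u. x = (\<Sum>g\<in>G. u g * g)"
  using R.span_finite[of G] by (auto simp: ideal_gen_eq)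

lemma ideal_eq_UNIV_if_one: "is_ideal I \<Longrightarrow> 1 \<in> I \<Longrightarrow> I = UNIV"
  by (metis UNIV_eq_I ideal_mult_left mult.right_neutral)

lemma ideal_gen_mult:
  assumes x: "x \<in> ideal_gen A" and y: "y \<in> ideal_gen B" and T: "is_ideal T"
    and AB: "\<And>u v. u \<in> A \<Longrightarrow> v \<in> B \<Longrightarrow> u * v \<in> T"
  shows "x * y \<in> T"
proof -
  have uy: "u * y \<in> T" if "u \<in> A" for u
    using y unfolding ideal_gen_eq
    by (induction y rule: R.span_induct_alt)
       (simp_all add: ring_distribs mult.left_commute[of u] ideal_zero[OF T]
          ideal_add[OF T] ideal_mult_left[OF T] AB that)
  show ?thesis
    using x unfolding ideal_gen_eq
    by (induction x rule: R.span_induct_alt)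
       (simp_all add: ring_distribs mult.assoc ideal_zero[OF T]
          ideal_add[OF T] ideal_mult_left[OF T] uy)
qed

lemma prod_list_in_ideal_pow: "length xs = n \<Longrightarrow> set xs \<subseteq> a \<Longrightarrow> prod_list xs \<in> ideal_pow a n"
  unfolding ideal_pow_def by (rule set_mp[OF ideal_gen_superset]) blast

lemma ideal_pow_0 [simp]: "ideal_pow a 0 = UNIV"
  using prod_list_in_ideal_pow[of "[]" 0 a] by (intro ideal_eq_UNIV_if_one) simp_all

lemma ideal_pow_1:
  assumes "is_ideal a"
  shows "ideal_pow a 1 = a"
proof -
  have "{prod_list xs |xs. length xs = 1 \<and> set xs \<subseteq> a} = a"
  proof (intro equalityI subsetI)
    fix y assume "y \<in> {prod_list xs |xs. length xs = 1 \<and> set xs \<subseteq> a}"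
    then show "y \<in> a" by (auto simp: length_Suc_conv)
  next
    fix y assume "y \<in> a"
    then show "y \<in> {prod_list xs |xs. length xs = 1 \<and> set xs \<subseteq> a}"
      by (auto intro!: exI[of _ "[y]"])
  qed
  then show ?thesis
    by (simp add: ideal_pow_def ideal_gen_of_ideal assms)
qed

lemma ideal_pow_Suc_subset: "ideal_pow a (Suc n) \<subseteq> ideal_pow a n"
  unfolding ideal_pow_def[of a "Suc n"]
proof (rule ideal_gen_minimal, safe)
  fix xs :: "'a list" assume "length xs = Suc n" "set xs \<subseteq> a"
  then obtain y ys where "xs = y # ys" "length ys = n" "set ys \<subseteq> a"
    by (cases xs) auto
  then show "prod_list xs \<in> ideal_pow a n"
    by (simp add: ideal_mult_left prod_list_in_ideal_pow)
qed simp

lemma ideal_pow_antimono: "m \<le> n \<Longrightarrow> ideal_pow a n \<subseteq> ideal_pow a m"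
  by (induction n rule: dec_induct) (use ideal_pow_Suc_subset in blast)+

lemma is_ideal_combinations:
  assumes J: "is_ideal J"
  shows "is_ideal {z. \<exists>\<beta>. (\<forall>g. \<beta> g \<in> J) \<and> z = (\<Sum>g\<in>G. g * \<beta> g)}"
  unfolding is_ideal_iff
proof (rule R.subspaceI)
  show "0 \<in> {z. \<exists>\<beta>. (\<forall>g. \<beta> g \<in> J) \<and> z = (\<Sum>g\<in>G. g * \<beta> g)}"
    by (auto intro!: exI[of _ "\<lambda>_. 0"] ideal_zero[OF J])
next
  fix x y assume "x \<in> {z. \<exists>\<beta>. (\<forall>g. \<beta> g \<in> J) \<and> z = (\<Sum>g\<in>G. g * \<beta> g)}"
    "y \<in> {z. \<exists>\<beta>. (\<forall>g. \<beta> g \<in> J) \<and> z = (\<Sum>g\<in>G. g * \<beta> g)}"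
  then obtain \<beta> \<gamma> where "\<forall>g. \<beta> g \<in> J" "x = (\<Sum>g\<in>G. g * \<beta> g)"
    "\<forall>g. \<gamma> g \<in> J" "y = (\<Sum>g\<in>G. g * \<gamma> g)" by blast
  then show "x + y \<in> {z. \<exists>\<beta>. (\<forall>g. \<beta> g \<in> J) \<and> z = (\<Sum>g\<in>G. g * \<beta> g)}"
    by (intro CollectI exI[of _ "\<lambda>g. \<beta> g + \<gamma> g"])
       (auto simp: distrib_left sum.distrib intro: ideal_add[OF J])
next
  fix c x assume "x \<in> {z. \<exists>\<beta>. (\<forall>g. \<beta> g \<in> J) \<and> z = (\<Sum>g\<in>G. g * \<beta> g)}"
  then obtain \<beta> where "\<forall>g. \<beta> g \<in> J" "x = (\<Sum>g\<in>G. g * \<beta> g)" by blast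
  then show "c * x \<in> {z. \<exists>\<beta>. (\<forall>g. \<beta> g \<in> J) \<and> z = (\<Sum>g\<in>G. g * \<beta> g)}"
    by (intro CollectI exI[of _ "\<lambda>g. c * \<beta> g"])
       (auto simp: sum_distrib_left mult.left_commute intro: ideal_mult_left[OF J])
qed

lemma ideal_pow_add_decomp:
  assumes G: "finite G" "ideal_pow a n = ideal_gen G" and z: "z \<in> ideal_pow a (n + j)"
  shows "\<exists>\<beta>. (\<forall>g. \<beta> g \<in> ideal_pow a j) \<and> z = (\<Sum>g\<in>G. g * \<beta> g)"
proof -
  let ?T = "{z. \<exists>\<beta>. (\<forall>g. \<beta> g \<in> ideal_pow a j) \<and> z = (\<Sum>g\<in>G. g * \<beta> g)}"
  have "ideal_pow a (n + j) \<subseteq> ?T"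
    unfolding ideal_pow_def[of a "n + j"]
  proof (rule ideal_gen_minimal[OF _ is_ideal_combinations[OF is_ideal_ideal_pow]], rule subsetI)
    fix z assume "z \<in> {prod_list xs |xs. length xs = n + j \<and> set xs \<subseteq> a}"
    then obtain xs where z: "z = prod_list xs" and xs: "length xs = n + j" "set xs \<subseteq> a"
      by blast
    have "prod_list (take n xs) \<in> ideal_gen G"
      using xs G(2) prod_list_in_ideal_pow[of "take n xs" n a] set_take_subset[of n xs] by auto
    then obtain u where u: "prod_list (take n xs) = (\<Sum>g\<in>G. u g * g)"
      using ideal_gen_finite[OF G(1)] by blast
    have drop: "prod_list (drop n xs) \<in> ideal_pow a j"
      using xs by (intro prod_list_in_ideal_pow) (auto dest: in_set_dropD)
    have "z = prod_list (take n xs) * prod_list (drop n xs)"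
      unfolding z by (metis append_take_drop_id prod_list.append)
    also have "\<dots> = (\<Sum>g\<in>G. g * (u g * prod_list (drop n xs)))"
      unfolding u sum_distrib_right by (simp add: mult_ac)
    finally show "z \<in> ?T"
      using drop by (auto intro!: exI[of _ "\<lambda>g. u g * prod_list (drop n xs)"] ideal_mult_left)
  qed
  then show ?thesis using z by blast
qed

lemma length_eq_sum_count_list:
  assumes "finite G" "set xs \<subseteq> G"
  shows "length xs = (\<Sum>g\<in>G. count_list xs g)"
  using assms(2)
proof (induction xs)
  case (Cons x xs)
  have "(\<Sum>g\<in>G. count_list (x # xs) g) = (\<Sum>g\<in>G. count_list xs g + (if x = g then 1 else 0))"
    by (intro sum.cong) auto
  also have "\<dots> = (\<Sum>g\<in>G. count_list xs g) + 1"
    using Cons.prems assms(1) by (simp add: sum.distrib)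
  finally show ?case using Cons by simp
qed simp

lemma power_count_list_dvd_prod_list: "g ^ count_list xs g dvd prod_list (xs :: 'a::comm_ring_1 list)"
  by (induction xs) (auto simp: mult_dvd_mono intro: dvd_mult)

lemma ideal_pow_ideal_gen_subset:
  "ideal_pow (ideal_gen G) n \<subseteq> ideal_gen {prod_list xs |xs. length xs = n \<and> set xs \<subseteq> G}"
proof -
  let ?Mon = "\<lambda>n. ideal_gen {prod_list xs |xs. length xs = n \<and> set xs \<subseteq> G}"
  have "prod_list ys \<in> ?Mon (length ys)" if "set ys \<subseteq> ideal_gen G" for ys
    using that
  proof (induction ys)
    case Nil
    then show ?case by (intro set_mp[OF ideal_gen_superset]) auto
  next
    case (Cons y ys)
    have "y * prod_list ys \<in> ?Mon (Suc (length ys))"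
    proof (rule ideal_gen_mult[of y G "prod_list ys"])
      fix u v assume "u \<in> G" "v \<in> {prod_list xs |xs. length xs = length ys \<and> set xs \<subseteq> G}"
      then obtain xs where "v = prod_list xs" "length xs = length ys" "set xs \<subseteq> G" by blast
      then show "u * v \<in> ?Mon (Suc (length ys))"
        using \<open>u \<in> G\<close> by (auto intro!: set_mp[OF ideal_gen_superset] exI[of _ "u # xs"])
    qed (use Cons in simp_all)
    then show ?case by simp
  qed
  then show ?thesis unfolding ideal_pow_def[of _ n]
    by (intro ideal_gen_minimal) auto
qed

text \<open>By pigeonhole, a product of \<open>card G * K + 1\<close> generators contains some generator
  at least \<open>K\<close> times.\<close>
lemma ideal_pow_subset_if_powers_in:
  assumes G: "finite G" and J: "is_ideal J" and pow: "\<And>g. g \<in> G \<Longrightarrow> \<exists>k. g ^ k \<in> J"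
  shows "\<exists>n. ideal_pow (ideal_gen G) n \<subseteq> J"
proof -
  obtain k where k: "\<And>g. g \<in> G \<Longrightarrow> g ^ k g \<in> J" using pow by metis
  define K where "K = (\<Sum>g\<in>G. k g)"
  have gK: "g ^ K \<in> J" if "g \<in> G" for g
  proof -
    have "k g \<le> K" unfolding K_def using G that by (intro member_le_sum) auto
    then have "g ^ K = g ^ (K - k g) * g ^ k g" by (simp flip: power_add)
    then show ?thesis using k[OF that] ideal_mult_left[OF J] by metis
  qed
  have "ideal_gen {prod_list xs |xs. length xs = card G * K + 1 \<and> set xs \<subseteq> G} \<subseteq> J"
  proof (rule ideal_gen_minimal[OF _ J], rule subsetI)
    fix z assume "z \<in> {prod_list xs |xs. length xs = card G * K + 1 \<and> set xs \<subseteq> G}"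
    then obtain xs where xs: "z = prod_list xs" "length xs = card G * K + 1" "set xs \<subseteq> G"
      by blast
    have "\<exists>g\<in>G. K \<le> count_list xs g"
    proof (rule ccontr)
      assume "\<not> ?thesis"
      then have "(\<Sum>g\<in>G. count_list xs g) \<le> (\<Sum>g\<in>G. K)"
        by (intro sum_mono) auto
      then show False using length_eq_sum_count_list[OF G xs(3)] xs(2) by simp
    qed
    then obtain g where g: "g \<in> G" "g ^ K dvd z"
      using power_count_list_dvd_prod_list[of _ xs] xs(1)
      by (metis dvd_trans le_imp_power_dvd)
    then obtain w where "z = g ^ K * w" by (auto elim: dvdE)
    then show "z \<in> J" using gK[OF g(1)] ideal_mult_right[OF J] by simp
  qed
  then show ?thesis using ideal_pow_ideal_gen_subset by blast
qed

lemma adic_sub_ring: "adic_sub (*) a n UNIV = ideal_pow a n"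
proof -
  have "{r * x |r x. r \<in> ideal_pow a n \<and> x \<in> UNIV} = ideal_pow a n"
    by (auto intro: ideal_mult_right) (metis mult.right_neutral)
  then show ?thesis
    by (simp add: adic_sub_def ideal_gen_of_ideal flip: ideal_gen_eq)
qed

context module
begin

lemma subspace_Union_chain:
  assumes "C \<noteq> {}" and "subset.chain {S. subspace S} C"
  shows "subspace (\<Union>C)"
proof (rule subspaceI)
  have sub: "\<And>S. S \<in> C \<Longrightarrow> subspace S"
    and chain: "\<And>S T. S \<in> C \<Longrightarrow> T \<in> C \<Longrightarrow> S \<subseteq> T \<or> T \<subseteq> S"
    using assms(2) unfolding subset_chain_def by auto
  show "0 \<in> \<Union>C" using assms(1) sub subspace_0 by blast
  show "x + y \<in> \<Union>C" if xy: "x \<in> \<Union>C" "y \<in> \<Union>C" for x y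
  proof -
    obtain S T where "S \<in> C" "T \<in> C" "x \<in> S" "y \<in> T" using xy by blast
    then show ?thesis using chain[of S T] sub subspace_add by blast
  qed
  show "c *s x \<in> \<Union>C" if "x \<in> \<Union>C" for c x
    using that sub subspace_scale by blast
qed

lemma span_insert_eq_set_plus: "span (insert s S) = span {s} + span S"
  using span_Un[of "{s}" S] by (auto simp: set_plus_def)

lemma subspace_set_plus:
  assumes "subspace A" "subspace B"
  shows "subspace (A + B)"
proof -
  have "A + B = span (A \<union> B)"
    unfolding span_Un span_eq_iff[THEN iffD2, OF assms(1)] span_eq_iff[THEN iffD2, OF assms(2)]
    by (auto simp: set_plus_def)
  then show ?thesis by simp
qed

lemma set_plus_subset_subspace: "subspace C \<Longrightarrow> A \<subseteq> C \<Longrightarrow> B \<subseteq> C \<Longrightarrow> A + B \<subseteq> C"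
  by (auto simp: set_plus_def intro: subspace_add)

lemma subspace_set_plus_self: "subspace A \<Longrightarrow> A + A = A"
  by (metis set_plus_subset_subspace set_zero_plus2 subspace_0 subset_antisym order_refl)

lemma subset_set_plus_left: "subspace B \<Longrightarrow> A \<subseteq> A + B"
  using set_zero_plus2[of B A] subspace_0[of B] by (simp add: add.commute)

lemma subset_set_plus_right: "subspace A \<Longrightarrow> B \<subseteq> A + B"
  using set_zero_plus2[of A B] subspace_0[of A] by simp

lemma adic_sub_subspace [simp]: "subspace (adic_sub scale a n N)"
  by (simp add: adic_sub_def)

lemma adic_sub_mem: "r \<in> ideal_pow a n \<Longrightarrow> x \<in> N \<Longrightarrow> r *s x \<in> adic_sub scale a n N"
  unfolding adic_sub_def by (rule span_base) blast

lemma adic_sub_minimal: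
  "subspace T \<Longrightarrow> (\<And>r x. r \<in> ideal_pow a n \<Longrightarrow> x \<in> N \<Longrightarrow> r *s x \<in> T) \<Longrightarrow>
    adic_sub scale a n N \<subseteq> T"
  unfolding adic_sub_def by (rule span_minimal) auto

lemma adic_sub_subset: "subspace N \<Longrightarrow> adic_sub scale a n N \<subseteq> N"
  by (rule adic_sub_minimal) (auto intro: subspace_scale)

lemma adic_sub_mono: "N \<subseteq> N' \<Longrightarrow> adic_sub scale a n N \<subseteq> adic_sub scale a n N'"
  unfolding adic_sub_def by (rule span_mono) blast

lemma adic_sub_antimono: "m \<le> n \<Longrightarrow> adic_sub scale a n N \<subseteq> adic_sub scale a m N"
  by (rule adic_sub_minimal) (auto intro!: adic_sub_mem dest: ideal_pow_antimono)

lemma adic_sub_0: "subspace N \<Longrightarrow> adic_sub scale a 0 N = N"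
  using adic_sub_mem[of 1 a 0 _ N] by (auto dest: adic_sub_subset)

lemma adic_sub_set_plus:
  "subspace A \<Longrightarrow> subspace B \<Longrightarrow>
    adic_sub scale a n (A + B) \<subseteq> adic_sub scale a n A + adic_sub scale a n B"
proof (rule adic_sub_minimal[OF subspace_set_plus[OF adic_sub_subspace adic_sub_subspace]])
  fix r x assume "r \<in> ideal_pow a n" "x \<in> A + B"
  then show "r *s x \<in> adic_sub scale a n A + adic_sub scale a n B"
    by (auto simp: scale_right_distrib intro!: adic_sub_mem elim!: set_plus_elim)
qed

lemma adic_sub_add: "y \<in> adic_sub scale a n N \<Longrightarrow> z \<in> adic_sub scale a n N \<Longrightarrow>
    y + z \<in> adic_sub scale a n N"
  by (rule subspace_add[OF adic_sub_subspace])

lemma adic_sub_diff: "y \<in> adic_sub scale a n N \<Longrightarrow> z \<in> adic_sub scale a n N \<Longrightarrow>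
    y - z \<in> adic_sub scale a n N"
  by (rule subspace_diff[OF adic_sub_subspace])

lemma adic_sub_scale: "z \<in> adic_sub scale a n N \<Longrightarrow> c *s z \<in> adic_sub scale a n N"
  by (rule subspace_scale[OF adic_sub_subspace])

lemma adic_sub_zero: "0 \<in> adic_sub scale a n N"
  by (rule subspace_0[OF adic_sub_subspace])

lemma adic_sub_span_singleton:
  assumes "z \<in> adic_sub scale a n (span {x})"
  shows "\<exists>\<alpha>\<in>ideal_pow a n. z = \<alpha> *s x"
proof -
  let ?T = "(\<lambda>\<alpha>. \<alpha> *s x) ` ideal_pow a n"
  have "subspace ?T"
  proof (rule subspaceI)
    show "0 \<in> ?T" using ideal_zero[of "ideal_pow a n"] by force
    show "y + w \<in> ?T" if "y \<in> ?T" "w \<in> ?T" for y w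
      using that ideal_add[of "ideal_pow a n"] by (force simp: scale_left_distrib)
    show "c *s y \<in> ?T" if "y \<in> ?T" for c y
      using that ideal_mult_left[of "ideal_pow a n"] by force
  qed
  then have "adic_sub scale a n (span {x}) \<subseteq> ?T"
    by (rule adic_sub_minimal)
       (auto simp: span_singleton intro!: image_eqI ideal_mult_right)
  then show ?thesis using assms by blast
qed

lemma coset_mem_iff: "subspace A \<Longrightarrow> z \<in> (+) x ` A \<longleftrightarrow> z - x \<in> A"
  by (auto intro: image_eqI[of _ _ "z - x"])

lemma coset_eq:
  assumes A: "subspace A" and xy: "x - y \<in> A"
  shows "(+) x ` A = (+) y ` A"
proof -
  have "z - x \<in> A \<longleftrightarrow> z - y \<in> A" for z
  proof
    assume "z - x \<in> A"
    then have "(z - x) + (x - y) \<in> A" using xy subspace_add[OF A] by blast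
    then show "z - y \<in> A" by simp
  next
    assume "z - y \<in> A"
    then have "(z - y) - (x - y) \<in> A" using xy subspace_diff[OF A] by blast
    then show "z - x \<in> A" by simp
  qed
  then show ?thesis using coset_mem_iff[OF A] by blast
qed

lemma coset_self: "subspace A \<Longrightarrow> x \<in> (+) x ` A"
  by (simp add: coset_mem_iff subspace_0)

lemma subspace_scale_image:
  assumes N: "subspace N"
  shows "subspace ((*s) c ` N)"
proof (rule subspaceI)
  show "0 \<in> (*s) c ` N"
    using subspace_0[OF N] by (metis image_eqI scale_zero_right)
  fix x y assume "x \<in> (*s) c ` N"
  then obtain u where u: "u \<in> N" "x = c *s u" by blast
  show "d *s x \<in> (*s) c ` N" for d
    using u subspace_scale[OF N u(1)] by (metis image_eqI scale_left_commute)
  assume "y \<in> (*s) c ` N"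
  then obtain v where v: "v \<in> N" "y = c *s v" by blast
  show "x + y \<in> (*s) c ` N"
    using u v subspace_add[OF N u(1) v(1)] by (metis image_eqI scale_right_distrib)
qed

lemma subspace_scale_preimage:
  assumes L: "subspace L"
  shows "subspace {y. c *s y \<in> L}"
proof (rule subspaceI)
  show "0 \<in> {y. c *s y \<in> L}" using subspace_0[OF L] by simp
  show "y + z \<in> {y. c *s y \<in> L}" if "y \<in> {y. c *s y \<in> L}" "z \<in> {y. c *s y \<in> L}" for y z
    using that subspace_add[OF L] by (simp add: scale_right_distrib)
  show "d *s y \<in> {y. c *s y \<in> L}" if "y \<in> {y. c *s y \<in> L}" for d y
    using that subspace_scale[OF L] by (metis mem_Collect_eq scale_left_commute)
qed

lemma is_ideal_colon: "subspace L \<Longrightarrow> is_ideal {r. \<forall>y\<in>N. r *s y \<in> L}"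
  unfolding is_ideal_iff
  by (rule R.subspaceI)
     (auto simp: scale_left_distrib subspace_0 subspace_add simp flip: scale_scale
           intro: subspace_scale)

lemma exists_maximal_subspace_meeting:
  assumes "subspace B" "B \<subseteq> N" "B \<subseteq> K"
  shows "\<exists>L. subspace L \<and> L \<subseteq> N \<and> L \<inter> K = B \<and>
    (\<forall>L'. subspace L' \<and> L' \<subseteq> N \<and> L' \<inter> K = B \<and> L \<subseteq> L' \<longrightarrow> L' = L)"
proof -
  let ?A = "{L. subspace L \<and> L \<subseteq> N \<and> L \<inter> K = B}"
  have "\<exists>L\<in>?A. \<forall>L'\<in>?A. L \<subseteq> L' \<longrightarrow> L' = L"
  proof (rule subset_Zorn_nonempty)
    show "?A \<noteq> {}" using assms by auto
    fix C assume C: "C \<noteq> {}" "subset.chain ?A C"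
    then have "C \<subseteq> ?A" by (simp add: subset_chain_def)
    then have "\<Union>C \<subseteq> N" "\<Union>C \<inter> K = B" using C(1) by auto
    moreover have "subset.chain {S. subspace S} C"
      using C(2) by (auto simp: subset_chain_def)
    then have "subspace (\<Union>C)" by (rule subspace_Union_chain[OF C(1)])
    ultimately show "\<Union>C \<in> ?A" by blast
  qed
  then obtain L where "L \<in> ?A" "\<forall>L'\<in>?A. L \<subseteq> L' \<longrightarrow> L' = L" ..
  then show ?thesis by (intro exI[of _ L]) simp
qed

end

section \<open>Nakayama's lemma and noetherian modules\<close>

lemma ideal_in_maximal_ideal:
  assumes I: "is_ideal I" "1 \<notin> I"
  shows "\<exists>M. maximal_ideal M \<and> I \<subseteq> M"
proof -
  let ?A = "{J. is_ideal J \<and> I \<subseteq> J \<and> 1 \<notin> J}"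
  have "\<exists>M\<in>?A. \<forall>J\<in>?A. M \<subseteq> J \<longrightarrow> J = M"
  proof (rule subset_Zorn_nonempty)
    show "?A \<noteq> {}" using I by auto
    fix C assume C: "C \<noteq> {}" "subset.chain ?A C"
    then have "C \<subseteq> ?A" by (simp add: subset_chain_def)
    then have "I \<subseteq> \<Union>C" "1 \<notin> \<Union>C" using C(1) by auto
    have "subset.chain {S. R.subspace S} C"
      using C(2) by (auto simp: subset_chain_def is_ideal_iff)
    then have "is_ideal (\<Union>C)"
      using R.subspace_Union_chain[OF C(1)] by (simp add: is_ideal_iff)
    with \<open>I \<subseteq> \<Union>C\<close> \<open>1 \<notin> \<Union>C\<close> show "\<Union>C \<in> ?A" by simp
  qed
  then obtain M where M: "M \<in> ?A" "\<forall>J\<in>?A. M \<subseteq> J \<longrightarrow> J = M" ..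
  have "maximal_ideal M"
    unfolding maximal_ideal_def
  proof (intro conjI allI impI)
    show "is_ideal M" "M \<noteq> UNIV" using M(1) by auto
    fix J assume J: "is_ideal J \<and> M \<subseteq> J"
    show "J = M \<or> J = UNIV"
    proof (cases "1 \<in> J")
      case True
      then show ?thesis using J ideal_eq_UNIV_if_one by blast
    next
      case False
      then have "J \<in> ?A" using J M(1) by blast
      then show ?thesis using M(2) J by blast
    qed
  qed
  then show ?thesis using M by blast
qed

lemma jacobson_radical_one_minus_unit:
  assumes "x \<in> jacobson_radical"
  shows "\<exists>u. u * (1 - x) = 1"
proof (rule ccontr)
  assume "\<nexists>u. u * (1 - x) = 1"
  then have "1 \<notin> ideal_gen {1 - x}"
    by (auto simp: ideal_gen_eq R.span_singleton)
  then obtain M where M: "maximal_ideal M" "ideal_gen {1 - x} \<subseteq> M"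
    using ideal_in_maximal_ideal[OF is_ideal_ideal_gen] by blast
  have "x \<in> M" using assms M(1) by (auto simp: jacobson_radical_def)
  moreover have "1 - x \<in> M" using M(2) ideal_gen_superset by blast
  moreover have M_ideal: "is_ideal M" and "M \<noteq> UNIV"
    using M(1) by (simp_all add: maximal_ideal_def)
  ultimately show False
    using ideal_add[OF M_ideal, of "1 - x" x] ideal_eq_UNIV_if_one[OF M_ideal] by simp
qed

context module
begin

lemma is_ideal_coefficients:
  assumes "subspace N"
  shows "is_ideal {r. \<exists>y\<in>span S. r *s s + y \<in> N}"
  unfolding is_ideal_iff
proof (rule R.subspaceI)
  show "0 \<in> {r. \<exists>y\<in>span S. r *s s + y \<in> N}"
    using subspace_0[OF assms] span_zero by force
next
  fix r r' assume "r \<in> {r. \<exists>y\<in>span S. r *s s + y \<in> N}" "r' \<in> {r. \<exists>y\<in>span S. r *s s + y \<in> N}"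
  then obtain y y' where "y \<in> span S" "r *s s + y \<in> N" "y' \<in> span S" "r' *s s + y' \<in> N"
    by blast
  then have "(r + r') *s s + (y + y') \<in> N" "y + y' \<in> span S"
    using subspace_add[OF assms, of "r *s s + y" "r' *s s + y'"] span_add
    by (auto simp: algebra_simps)
  then show "r + r' \<in> {r. \<exists>y\<in>span S. r *s s + y \<in> N}" by blast
next
  fix c r assume "r \<in> {r. \<exists>y\<in>span S. r *s s + y \<in> N}"
  then obtain y where "y \<in> span S" "r *s s + y \<in> N" by blast
  then have "(c * r) *s s + c *s y \<in> N" "c *s y \<in> span S"
    using subspace_scale[OF assms, of "r *s s + y" c] span_scale
    by (auto simp: algebra_simps)
  then show "c * r \<in> {r. \<exists>y\<in>span S. r *s s + y \<in> N}" by blast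
qed

lemma subspace_span_insert_generated:
  assumes N: "subspace N" "N \<subseteq> span (insert s S)"
    and G: "finite G" "{r. \<exists>y\<in>span S. r *s s + y \<in> N} = ideal_gen G"
    and y: "\<And>g. g \<in> G \<Longrightarrow> y g \<in> span S \<and> g *s s + y g \<in> N"
  shows "N = span ((N \<inter> span S) \<union> (\<lambda>g. g *s s + y g) ` G)"
proof
  let ?B = "(N \<inter> span S) \<union> (\<lambda>g. g *s s + y g) ` G"
  show "span ?B \<subseteq> N"
    using N(1) y by (intro span_minimal) auto
  show "N \<subseteq> span ?B"
  proof
    fix n assume n: "n \<in> N"
    then obtain k where k: "n - k *s s \<in> span S"
      using N(2) span_breakdown_eq by blast
    then have "k \<in> ideal_gen G"
      unfolding G(2)[symmetric] using n by (intro CollectI bexI[of _ "n - k *s s"]) auto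
    then obtain u where u: "k = (\<Sum>g\<in>G. u g * g)" using G(1) ideal_gen_finite by blast
    define w where "w = (\<Sum>g\<in>G. u g *s (g *s s + y g))"
    have w_span: "w \<in> span ?B"
      unfolding w_def by (intro span_sum span_scale) (auto intro: span_base)
    have w_N: "w \<in> N"
      unfolding w_def using y by (intro subspace_sum[OF N(1)] subspace_scale[OF N(1)]) auto
    have "n - w = (n - k *s s) - (\<Sum>g\<in>G. u g *s y g)"
      unfolding w_def u scale_sum_left by (simp add: scale_right_distrib sum.distrib algebra_simps)
    also have "\<dots> \<in> span S" using y by (intro span_diff[OF k] span_sum span_scale) auto
    finally have "n - w \<in> span ?B"
      using n w_N subspace_diff[OF N(1)] span_superset[of ?B] by blast
    then have "(n - w) + w \<in> span ?B" using w_span span_add by blast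
    then show "n \<in> span ?B" by simp
  qed
qed

lemma noetherian_subspace_finitely_generated:
  assumes noetherian: "noetherian_ring TYPE('a)" and S: "finite S"
    and N: "subspace N" "N \<subseteq> span S"
  shows "\<exists>T. finite T \<and> N = span T"
  using S N
proof (induction S arbitrary: N rule: finite_induct)
  case empty
  then have "N = span {}" using subspace_0[of N] by auto
  then show ?case by blast
next
  case (insert s S)
  have "is_ideal {r. \<exists>y\<in>span S. r *s s + y \<in> N}"
    using insert.prems(1) by (rule is_ideal_coefficients)
  then obtain G where G: "finite G" "{r. \<exists>y\<in>span S. r *s s + y \<in> N} = ideal_gen G"
    using noetherian unfolding noetherian_ring_def by blast
  have "\<forall>g\<in>G. \<exists>y\<in>span S. g *s s + y \<in> N"
    using ideal_gen_superset[of G] unfolding G(2)[symmetric] by blast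
  then obtain y where y: "\<And>g. g \<in> G \<Longrightarrow> y g \<in> span S \<and> g *s s + y g \<in> N" by metis
  obtain T where T: "finite T" "N \<inter> span S = span T"
    using insert.IH[of "N \<inter> span S"] insert.prems(1) subspace_inter subspace_span by blast
  have "N = span (span T \<union> (\<lambda>g. g *s s + y g) ` G)"
    using subspace_span_insert_generated[OF insert.prems G y] unfolding T(2) .
  also have "\<dots> = span (T \<union> (\<lambda>g. g *s s + y g) ` G)"
    by (simp add: span_Un span_span)
  finally have "N = span (T \<union> (\<lambda>g. g *s s + y g) ` G)" .
  moreover have "finite (T \<union> (\<lambda>g. g *s s + y g) ` G)" using T(1) G(1) by simp
  ultimately show ?case by blast
qed

lemma nakayama_cyclic:
  assumes a: "is_ideal a" "a \<subseteq> jacobson_radical"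
    and P: "subspace P" and s: "s \<in> P + adic_sub scale a 1 (span {s})"
  shows "s \<in> P"
proof -
  obtain p z where "s = p + z" "p \<in> P" "z \<in> adic_sub scale a 1 (span {s})"
    using s by (auto elim: set_plus_elim)
  moreover obtain \<beta> where "\<beta> \<in> a" "z = \<beta> *s s"
    using adic_sub_span_singleton[OF \<open>z \<in> _\<close>] ideal_pow_1[OF a(1)] by auto
  ultimately have "(1 - \<beta>) *s s = p"
    by (metis add_diff_cancel_right' scale_left_diff_distrib scale_one)
  moreover obtain u where "u * (1 - \<beta>) = 1"
    using jacobson_radical_one_minus_unit \<open>\<beta> \<in> a\<close> a(2) by blast
  ultimately have "s = u *s p" by (metis scale_scale scale_one)
  then show ?thesis using subspace_scale[OF P \<open>p \<in> P\<close>] by simp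
qed

lemma adic_sub_span_insert:
  "adic_sub scale a n (span (insert s S)) \<subseteq> span {s} + adic_sub scale a n (span S)"
proof -
  have "adic_sub scale a n (span (insert s S)) \<subseteq>
      adic_sub scale a n (span {s}) + adic_sub scale a n (span S)"
    unfolding span_insert_eq_set_plus[of s S] by (intro adic_sub_set_plus subspace_span)
  also have "\<dots> \<subseteq> span {s} + adic_sub scale a n (span S)"
    by (intro set_plus_mono2 adic_sub_subset subspace_span order_refl)
  finally show ?thesis .
qed

text \<open>Induction on the generators: the hypothesis for \<open>P + R s\<close> gives
  \<open>span S \<subseteq> P + R s\<close>, hence \<open>s \<in> P + a s\<close>, and the cyclic case yields \<open>s \<in> P\<close>.\<close>
lemma nakayama:
  assumes a: "is_ideal a" "a \<subseteq> jacobson_radical" and S: "finite S"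
    and P: "subspace P" and le: "span S \<subseteq> P + adic_sub scale a 1 (span S)"
  shows "span S \<subseteq> P"
  using S P le
proof (induction S arbitrary: P rule: finite_induct)
  case empty
  then show ?case using subspace_0 by auto
next
  case (insert s S)
  let ?a = "adic_sub scale a 1"
  have "span S \<subseteq> P + ?a (span (insert s S))"
    using insert.prems(2) span_mono[of S "insert s S"] by auto
  also have "\<dots> \<subseteq> P + (span {s} + ?a (span S))"
    by (intro set_plus_mono2 order_refl adic_sub_span_insert)
  finally have "span S \<subseteq> (P + span {s}) + ?a (span S)" by (simp add: add.assoc)
  then have span_S: "span S \<subseteq> P + span {s}"
    using insert.IH insert.prems(1) subspace_set_plus subspace_span by blast
  have M: "span (insert s S) \<subseteq> P + span {s}"
  proof -
    have "span (insert s S) \<subseteq> span {s} + (P + span {s})"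
      unfolding span_insert_eq_set_plus[of s S] using span_S by (rule set_plus_mono2[OF order_refl])
    also have "\<dots> = P + span {s}"
      by (simp add: add.left_commute[of "span {s}" P] subspace_set_plus_self)
    finally show ?thesis .
  qed
  have "?a (span (insert s S)) \<subseteq> ?a (P + span {s})"
    by (rule adic_sub_mono[OF M])
  also have "\<dots> \<subseteq> ?a P + ?a (span {s})"
    by (rule adic_sub_set_plus[OF insert.prems(1) subspace_span])
  also have "\<dots> \<subseteq> P + ?a (span {s})"
    using adic_sub_subset[OF insert.prems(1)] by (rule set_plus_mono2) simp
  finally have "s \<in> P + (P + ?a (span {s}))"
    using insert.prems(2) span_base[of s "insert s S"] set_plus_mono2[OF order_refl] by blast
  then have "s \<in> P + ?a (span {s})"
    by (simp add: add.assoc[symmetric] subspace_set_plus_self[OF insert.prems(1)])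
  then have "s \<in> P" by (rule nakayama_cyclic[OF a insert.prems(1)])
  then have "P + span {s} \<subseteq> P"
    using insert.prems(1) by (intro set_plus_subset_subspace span_minimal) auto
  then show ?case using M by blast
qed

end

section \<open>The Krull intersection theorem\<close>

locale noetherian_adic_module = module scale
  for scale :: "'a::comm_ring_1 \<Rightarrow> 'b::ab_group_add \<Rightarrow> 'b" (infixr \<open>*s\<close> 75) +
  fixes a :: "'a set"
  assumes noetherian: "noetherian_ring TYPE('a)"
    and ideal: "is_ideal a"
    and jacobson: "a \<subseteq> jacobson_radical"
    and fin_gen: "fin_gen_module scale"
begin

lemma subspace_finitely_generated: "subspace N \<Longrightarrow> \<exists>T. finite T \<and> N = span T"
  using fin_gen noetherian_subspace_finitely_generated[OF noetherian]
  unfolding fin_gen_module_def by blast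

lemma ascending_chain_stabilises:
  assumes sub: "\<And>k. subspace (C k)" and step: "\<And>k. C k \<subseteq> C (Suc k)"
  shows "\<exists>k0. \<forall>k. C k \<subseteq> C k0"
proof -
  have mono: "i \<le> j \<Longrightarrow> C i \<subseteq> C j" for i j
    using lift_Suc_mono_le[of C, OF step] by blast
  have "subset.chain {S. subspace S} (range C)"
    unfolding subset_chain_def
  proof (intro conjI ballI)
    show "range C \<subseteq> {S. subspace S}" using sub by blast
    fix X Y assume "X \<in> range C" "Y \<in> range C"
    then obtain i j where "X = C i" "Y = C j" by blast
    then show "X \<subseteq> Y \<or> Y \<subseteq> X" using mono nat_le_linear[of i j] by blast
  qed
  then have "subspace (\<Union>k. C k)" by (intro subspace_Union_chain) auto
  then obtain T where T: "finite T" "(\<Union>k. C k) = span T"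
    using subspace_finitely_generated by meson
  have "\<forall>t\<in>T. \<exists>k. t \<in> C k" using T span_superset by blast
  then obtain k where k: "\<And>t. t \<in> T \<Longrightarrow> t \<in> C (k t)" by metis
  have "T \<subseteq> C (\<Sum>t\<in>T. k t)"
  proof
    fix t assume "t \<in> T"
    then have "k t \<le> (\<Sum>t\<in>T. k t)" using T(1) by (intro member_le_sum) auto
    then show "t \<in> C (\<Sum>t\<in>T. k t)" using mono k[OF \<open>t \<in> T\<close>] by blast
  qed
  then have "(\<Union>k. C k) \<subseteq> C (\<Sum>t\<in>T. k t)"
    unfolding T(2) using sub by (rule span_minimal)
  then show ?thesis by blast
qed

text \<open>Once the chain \<open>{y \<in> N. x\<^sup>k y \<in> L}\<close> has stabilised at \<open>k\<close>, the larger submodule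
  \<open>L + x\<^sup>k N\<close> still meets \<open>K\<close> in \<open>aK\<close>, so by maximality it equals \<open>L\<close>.\<close>
lemma power_maps_into_maximal_subspace:
  assumes N: "subspace N" and L: "subspace L" "L \<subseteq> N" "L \<inter> K = adic_sub scale a 1 K"
    and L_max: "\<forall>L'. subspace L' \<and> L' \<subseteq> N \<and> L' \<inter> K = adic_sub scale a 1 K \<and> L \<subseteq> L' \<longrightarrow>
      L' = L"
    and x: "x \<in> a"
  shows "\<exists>k. \<forall>y\<in>N. x ^ k *s y \<in> L"
proof -
  define C where "C k = N \<inter> {y. x ^ k *s y \<in> L}" for k
  have "subspace (C k)" for k
    unfolding C_def by (intro subspace_inter N subspace_scale_preimage L(1))
  moreover have "C k \<subseteq> C (Suc k)" for k
    unfolding C_def using subspace_scale[OF L(1), of _ x] by (auto simp flip: scale_scale)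
  ultimately obtain k where k: "C (Suc k) \<subseteq> C k"
    using ascending_chain_stabilises by meson
  define L' where "L' = L + (*s) (x ^ k) ` N"
  have "subspace L'"
    unfolding L'_def by (intro subspace_set_plus subspace_scale_image L(1) N)
  moreover have "L' \<subseteq> N"
    unfolding L'_def using L(2) subspace_scale[OF N]
    by (intro set_plus_subset_subspace[OF N]) auto
  moreover have "L \<subseteq> L'"
    unfolding L'_def by (intro subset_set_plus_left subspace_scale_image N)
  moreover have "L' \<inter> K \<subseteq> L"
  proof
    fix y assume y: "y \<in> L' \<inter> K"
    then obtain l n where yln: "y = l + x ^ k *s n" "l \<in> L" "n \<in> N"
      unfolding L'_def by (auto elim!: set_plus_elim)
    have "x *s y \<in> L"
      using y L(3) adic_sub_mem[of x a 1 y K] ideal_pow_1[OF ideal] x by blast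
    then have "x *s y - x *s l \<in> L"
      using subspace_diff[OF L(1)] subspace_scale[OF L(1) yln(2)] by blast
    then have "n \<in> C (Suc k)"
      unfolding C_def using yln by (simp add: scale_right_distrib scale_scale)
    then have "x ^ k *s n \<in> L" using k unfolding C_def by blast
    then show "y \<in> L" using yln subspace_add[OF L(1)] by blast
  qed
  then have "L' \<inter> K = adic_sub scale a 1 K"
    using L(3) \<open>L \<subseteq> L'\<close> by blast
  ultimately have "L' = L" using L_max by blast
  then show ?thesis unfolding L'_def using set_zero_plus2[OF subspace_0[OF L(1)]] by blast
qed

theorem krull_intersection:
  assumes N: "subspace N" and x: "\<And>n. x \<in> adic_sub scale a n N"
  shows "x = 0"
proof -
  define K where "K = (\<Inter>n. adic_sub scale a n N)"
  have K: "subspace K" "K \<subseteq> N"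
    unfolding K_def using adic_sub_0[OF N] by (auto intro: subspace_Int)
  have aK: "subspace (adic_sub scale a 1 K)"
      "adic_sub scale a 1 K \<subseteq> N" "adic_sub scale a 1 K \<subseteq> K"
    using adic_sub_subset[OF K(1)] K(2) by auto
  obtain L where L: "subspace L" "L \<subseteq> N" "L \<inter> K = adic_sub scale a 1 K"
    and L_max: "\<forall>L'. subspace L' \<and> L' \<subseteq> N \<and> L' \<inter> K = adic_sub scale a 1 K \<and> L \<subseteq> L' \<longrightarrow>
      L' = L"
    using exists_maximal_subspace_meeting[OF aK] by meson
  obtain G where G: "finite G" "a = ideal_gen G"
    using noetherian ideal unfolding noetherian_ring_def by meson
  have "\<exists>k. g ^ k \<in> {r. \<forall>y\<in>N. r *s y \<in> L}" if "g \<in> G" for g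
  proof -
    have "g \<in> a" using that ideal_gen_superset G(2) by auto
    then show ?thesis using power_maps_into_maximal_subspace[OF N L L_max] by simp
  qed
  then obtain n where "ideal_pow (ideal_gen G) n \<subseteq> {r. \<forall>y\<in>N. r *s y \<in> L}"
    using ideal_pow_subset_if_powers_in[OF G(1) is_ideal_colon[OF L(1)]] by blast
  then have "adic_sub scale a n N \<subseteq> L"
    unfolding G(2)[symmetric] by (intro adic_sub_minimal L(1)) auto
  moreover have "K \<subseteq> adic_sub scale a n N"
    unfolding K_def by (rule INT_lower) simp
  ultimately have "K \<subseteq> adic_sub scale a 1 K"
    using L(3) by blast
  moreover obtain T where T: "finite T" "K = span T"
    using subspace_finitely_generated[OF K(1)] by blast
  ultimately have "K \<subseteq> {0}"
    using nakayama[OF ideal jacobson T(1) subspace_single_0] by simp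
  moreover have "x \<in> K" unfolding K_def using x by simp
  ultimately show ?thesis by auto
qed

end

section \<open>Adically complete submodules\<close>

context noetherian_adic_module
begin

abbreviation apow :: "nat \<Rightarrow> 'b set \<Rightarrow> 'b set" where
  "apow n N \<equiv> adic_sub scale a n N"

lemma adically_complete_iff:
  "adically_complete scale a N \<longleftrightarrow>
    subspace N \<and> (\<forall>c\<in>adic_lim scale a N. \<exists>x\<in>N. \<forall>n. c n = (+) x ` apow n N)"
proof (cases "subspace N")
  case N: True
  let ?f = "\<lambda>x n. (+) x ` apow n N"
  have inj: "inj_on ?f N"
  proof (rule inj_onI)
    fix x y assume "x \<in> N" "y \<in> N" "?f x = ?f y"
    have "x - y \<in> apow n N" for n
    proof -
      have "(+) x ` apow n N = (+) y ` apow n N" using fun_cong[OF \<open>?f x = ?f y\<close>] by simp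
      then have "x \<in> (+) y ` apow n N" using coset_self[OF adic_sub_subspace] by metis
      then show ?thesis by (simp add: coset_mem_iff)
    qed
    then show "x = y" using krull_intersection[OF N, of "x - y"] by simp
  qed
  have img: "?f ` N \<subseteq> adic_lim scale a N"
  proof
    fix c assume "c \<in> ?f ` N"
    then obtain x where "x \<in> N" "c = ?f x" by blast
    moreover have "?f x (Suc n) \<subseteq> ?f x n" for n
      using adic_sub_antimono[of n "Suc n" a N] by auto
    ultimately show "c \<in> adic_lim scale a N" unfolding adic_lim_def by blast
  qed
  have "adically_complete scale a N \<longleftrightarrow> adic_lim scale a N \<subseteq> ?f ` N"
    using N inj img by (auto simp: adically_complete_def bij_betw_def)
  also have "\<dots> \<longleftrightarrow> (\<forall>c\<in>adic_lim scale a N. \<exists>x\<in>N. \<forall>n. c n = (+) x ` apow n N)"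
    by (auto simp: image_def fun_eq_iff)
  finally show ?thesis using N by blast
next
  case False
  then show ?thesis unfolding adically_complete_def by blast
qed

lemma adically_complete_subspace: "adically_complete scale a N \<Longrightarrow> subspace N"
  by (simp add: adically_complete_def)

lemma adically_complete_limit:
  assumes C: "adically_complete scale a N" and y: "\<And>n. y n \<in> N"
    and cauchy: "\<And>n. y (Suc n) - y n \<in> apow n N"
  shows "\<exists>x\<in>N. \<forall>n. x - y n \<in> apow n N"
proof -
  define c where "c n = (+) (y n) ` apow n N" for n
  have "c (Suc n) \<subseteq> c n" for n
  proof
    fix z assume "z \<in> c (Suc n)"
    then have "z - y (Suc n) \<in> apow n N"
      unfolding c_def using adic_sub_antimono[of n "Suc n" a N] by auto
    then have "(z - y (Suc n)) + (y (Suc n) - y n) \<in> apow n N"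
      using cauchy adic_sub_add by blast
    then show "z \<in> c n" unfolding c_def by (simp add: coset_mem_iff)
  qed
  then have "c \<in> adic_lim scale a N" unfolding adic_lim_def c_def using y by blast
  then obtain x where x: "x \<in> N" "\<And>n. c n = (+) x ` apow n N"
    using C unfolding adically_complete_iff by blast
  have "x - y n \<in> apow n N" for n
  proof -
    have "x \<in> (+) x ` apow n N" by (simp add: coset_self)
    then have "x \<in> (+) (y n) ` apow n N" using x(2)[of n] by (simp add: c_def)
    then show ?thesis by (simp add: coset_mem_iff)
  qed
  then show ?thesis using x(1) by blast
qed

lemma adically_completeI:
  assumes N: "subspace N"
    and lim: "\<And>y. (\<And>n. y n \<in> N) \<Longrightarrow> (\<And>n. y (Suc n) - y n \<in> apow n N) \<Longrightarrow>
      \<exists>x\<in>N. \<forall>n. x - y n \<in> apow n N"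
  shows "adically_complete scale a N"
  unfolding adically_complete_iff
proof (intro conjI N ballI)
  fix c assume "c \<in> adic_lim scale a N"
  then have c: "\<And>n. \<exists>x\<in>N. c n = (+) x ` apow n N" "\<And>n. c (Suc n) \<subseteq> c n"
    unfolding adic_lim_def by auto
  then obtain y where y: "\<And>n. y n \<in> N" "\<And>n. c n = (+) (y n) ` apow n N" by metis
  have "y (Suc n) - y n \<in> apow n N" for n
    using c(2)[of n] coset_self[of "apow (Suc n) N" "y (Suc n)"] y(2) by (auto simp: coset_mem_iff)
  then obtain x where x: "x \<in> N" "\<And>n. x - y n \<in> apow n N"
    using lim[of y, OF y(1)] by blast
  have "c n = (+) x ` apow n N" for n
    using y(2)[of n] coset_eq[OF adic_sub_subspace x(2)] by simp
  then show "\<exists>x\<in>N. \<forall>n. c n = (+) x ` apow n N" using x(1) by blast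
qed

lemma adically_complete_zero: "adically_complete scale a {0}"
  by (rule adically_completeI) (auto simp: adic_sub_zero)

lemma cauchy_seq_set_plus_split:
  assumes N1: "subspace N1" and N2: "subspace N2" and y: "\<And>n. y n \<in> N1 + N2"
    and cauchy: "\<And>n. y (Suc n) - y n \<in> apow n (N1 + N2)"
  obtains U V where "\<And>n. y n = U n + V n" "\<And>n. U n \<in> N1" "\<And>n. V n \<in> N2"
    "\<And>n. U (Suc n) - U n \<in> apow n N1" "\<And>n. V (Suc n) - V n \<in> apow n N2"
proof -
  obtain u0 v0 where uv0: "y 0 = u0 + v0" "u0 \<in> N1" "v0 \<in> N2"
    using y[of 0] by (auto elim: set_plus_elim)
  have "\<forall>n. \<exists>p q. p \<in> apow n N1 \<and> q \<in> apow n N2 \<and> y (Suc n) - y n = p + q"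
    using cauchy adic_sub_set_plus[OF N1 N2] by (blast elim: set_plus_elim)
  then obtain du dv where d: "\<And>n. du n \<in> apow n N1" "\<And>n. dv n \<in> apow n N2"
    "\<And>n. y (Suc n) - y n = du n + dv n" by metis
  define U where "U n = u0 + (\<Sum>k<n. du k)" for n
  define V where "V n = v0 + (\<Sum>k<n. dv k)" for n
  show thesis
  proof
    show "y n = U n + V n" for n
    proof (induction n)
      case (Suc n)
      have "y (Suc n) = y n + (du n + dv n)" using d(3)[of n] by (simp add: algebra_simps)
      then show ?case using Suc by (simp add: U_def V_def algebra_simps)
    qed (simp add: U_def V_def uv0)
    show "U n \<in> N1" for n
      unfolding U_def using uv0(2) d(1) adic_sub_subset[OF N1]
      by (blast intro: subspace_add[OF N1] subspace_sum[OF N1])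
    show "V n \<in> N2" for n
      unfolding V_def using uv0(3) d(2) adic_sub_subset[OF N2]
      by (blast intro: subspace_add[OF N2] subspace_sum[OF N2])
    show "U (Suc n) - U n \<in> apow n N1" "V (Suc n) - V n \<in> apow n N2" for n
      using d by (simp_all add: U_def V_def)
  qed
qed

lemma adically_complete_set_plus:
  assumes C1: "adically_complete scale a N1" and C2: "adically_complete scale a N2"
  shows "adically_complete scale a (N1 + N2)"
proof -
  have N1: "subspace N1" and N2: "subspace N2" using C1 C2 adically_complete_subspace by auto
  show ?thesis
  proof (rule adically_completeI[OF subspace_set_plus[OF N1 N2]])
    fix y assume "\<And>n. y n \<in> N1 + N2" "\<And>n. y (Suc n) - y n \<in> apow n (N1 + N2)"
    then obtain U V where UV: "\<And>n. y n = U n + V n" "\<And>n. U n \<in> N1" "\<And>n. V n \<in> N2"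
      "\<And>n. U (Suc n) - U n \<in> apow n N1" "\<And>n. V (Suc n) - V n \<in> apow n N2"
      using cauchy_seq_set_plus_split[OF N1 N2] by metis
    obtain X1 where X1: "X1 \<in> N1" "\<And>n. X1 - U n \<in> apow n N1"
      using adically_complete_limit[OF C1 UV(2,4)] by blast
    obtain X2 where X2: "X2 \<in> N2" "\<And>n. X2 - V n \<in> apow n N2"
      using adically_complete_limit[OF C2 UV(3,5)] by blast
    have "(X1 - U n) + (X2 - V n) \<in> apow n (N1 + N2)" for n
      using X1(2) X2(2) adic_sub_mono[OF subset_set_plus_left[OF N2], of a n]
        adic_sub_mono[OF subset_set_plus_right[OF N1], of a n]
      by (blast intro: adic_sub_add)
    then have "\<forall>n. X1 + X2 - y n \<in> apow n (N1 + N2)"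
      by (simp add: UV(1) algebra_simps)
    then show "\<exists>x\<in>N1 + N2. \<forall>n. x - y n \<in> apow n (N1 + N2)"
      using X1(1) X2(1) by blast
  qed
qed

lemma finite_subset_adically_complete:
  "finite T \<Longrightarrow> T \<subseteq> \<Union>{N. adically_complete scale a N} \<Longrightarrow>
    \<exists>N. adically_complete scale a N \<and> T \<subseteq> N"
proof (induction T rule: finite_induct)
  case empty
  then show ?case using adically_complete_zero by blast
next
  case (insert t T)
  obtain N where N: "adically_complete scale a N" "T \<subseteq> N" using insert by blast
  obtain Nt where Nt: "adically_complete scale a Nt" "t \<in> Nt" using insert.prems by blast
  have "Nt \<subseteq> Nt + N" "N \<subseteq> Nt + N"
    using N(1) Nt(1) adically_complete_subspace subset_set_plus_left subset_set_plus_right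
    by blast+
  then show ?case
    using adically_complete_set_plus[OF Nt(1) N(1)] N(2) Nt(2) by blast
qed

lemma subspace_Union_adically_complete: "subspace (\<Union>{N. adically_complete scale a N})"
proof (rule subspaceI)
  show "0 \<in> \<Union>{N. adically_complete scale a N}" using adically_complete_zero by blast
next
  fix x y assume "x \<in> \<Union>{N. adically_complete scale a N}" "y \<in> \<Union>{N. adically_complete scale a N}"
  then obtain N where "adically_complete scale a N" "x \<in> N" "y \<in> N"
    using finite_subset_adically_complete[of "{x, y}"] by auto
  then show "x + y \<in> \<Union>{N. adically_complete scale a N}"
    using subspace_add adically_complete_subspace by blast
next
  fix c x assume "x \<in> \<Union>{N. adically_complete scale a N}"
  then show "c *s x \<in> \<Union>{N. adically_complete scale a N}"
    using subspace_scale adically_complete_subspace by blast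
qed

lemma Union_adically_complete_eq:
  "\<exists>N. adically_complete scale a N \<and> \<Union>{N. adically_complete scale a N} = N"
proof -
  let ?U = "\<Union>{N. adically_complete scale a N}"
  obtain T where T: "finite T" "?U = span T"
    using subspace_finitely_generated[OF subspace_Union_adically_complete] by meson
  moreover have "T \<subseteq> ?U" unfolding T(2) by (rule span_superset)
  ultimately obtain N where N: "adically_complete scale a N" "T \<subseteq> N"
    using finite_subset_adically_complete by meson
  then have "?U \<subseteq> N"
    unfolding T(2) using adically_complete_subspace[OF N(1)] by (intro span_minimal)
  then show ?thesis using N(1) by blast
qed

lemma max_complete_eq_Union: "max_complete scale a = \<Union>{N. adically_complete scale a N}"
  unfolding max_complete_def
proof (rule the_equality)
  show "adically_complete scale a (\<Union>{N. adically_complete scale a N}) \<and>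
      (\<forall>N'. adically_complete scale a N' \<longrightarrow> N' \<subseteq> \<Union>{N. adically_complete scale a N})"
    using Union_adically_complete_eq by auto
next
  fix N assume "adically_complete scale a N \<and> (\<forall>N'. adically_complete scale a N' \<longrightarrow> N' \<subseteq> N)"
  then show "N = \<Union>{N. adically_complete scale a N}" by blast
qed

abbreviation Ca :: "'b set" where
  "Ca \<equiv> max_complete scale a"

lemma adically_complete_max_complete: "adically_complete scale a Ca"
  using Union_adically_complete_eq max_complete_eq_Union by auto

lemma subset_max_complete: "adically_complete scale a N \<Longrightarrow> N \<subseteq> Ca"
  unfolding max_complete_eq_Union by blast

lemma subspace_max_complete: "subspace Ca"
  using adically_complete_max_complete adically_complete_subspace by blast

end

section \<open>The completion of \<open>R\<close>\<close>

definition adic_class :: "'a::comm_ring_1 set \<Rightarrow> (nat \<Rightarrow> 'a) \<Rightarrow> nat \<Rightarrow> 'a set" where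
  "adic_class a f = (\<lambda>n. (+) (f n) ` ideal_pow a n)"

lemma adic_class_mem_iff: "z \<in> adic_class a f n \<longleftrightarrow> z - f n \<in> ideal_pow a n"
  unfolding adic_class_def by (rule R.coset_mem_iff) (simp flip: is_ideal_iff)

lemma adic_class_self: "f n \<in> adic_class a f n"
  by (simp add: adic_class_mem_iff ideal_zero)

lemma adic_class_eq: "f n - g n \<in> ideal_pow a n \<Longrightarrow> adic_class a f n = adic_class a g n"
  unfolding adic_class_def by (rule R.coset_eq) (simp_all flip: is_ideal_iff)

lemma completion_obtain_adic_class:
  assumes "c \<in> completion a"
  obtains f where "c = adic_class a f"
proof -
  have "\<forall>n. \<exists>x. c n = (+) x ` ideal_pow a n"
    using assms unfolding completion_def adic_lim_def adic_sub_ring by blast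
  then obtain f where "\<And>n. c n = (+) (f n) ` ideal_pow a n" by metis
  then have "c = adic_class a f" by (simp add: adic_class_def fun_eq_iff)
  then show thesis by (rule that)
qed

lemma adic_class_in_completion_iff:
  "adic_class a f \<in> completion a \<longleftrightarrow> (\<forall>n. f (Suc n) - f n \<in> ideal_pow a n)"
proof -
  have "adic_class a f (Suc n) \<subseteq> adic_class a f n \<longleftrightarrow> f (Suc n) - f n \<in> ideal_pow a n" for n
  proof
    assume "adic_class a f (Suc n) \<subseteq> adic_class a f n"
    then show "f (Suc n) - f n \<in> ideal_pow a n"
      using adic_class_self adic_class_mem_iff by blast
  next
    assume d: "f (Suc n) - f n \<in> ideal_pow a n"
    show "adic_class a f (Suc n) \<subseteq> adic_class a f n"
    proof
      fix z assume "z \<in> adic_class a f (Suc n)"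
      then have "z - f (Suc n) \<in> ideal_pow a n"
        using ideal_pow_Suc_subset by (auto simp: adic_class_mem_iff)
      then have "(z - f (Suc n)) + (f (Suc n) - f n) \<in> ideal_pow a n"
        using d by (rule ideal_add[OF is_ideal_ideal_pow])
      then show "z \<in> adic_class a f n" by (simp add: adic_class_mem_iff)
    qed
  qed
  then show ?thesis
    unfolding completion_def adic_lim_def adic_sub_ring by (auto simp: adic_class_def)
qed

lemma adic_class_cauchy:
  assumes "adic_class a f \<in> completion a" and "k \<le> l"
  shows "f l - f k \<in> ideal_pow a k"
  using assms(2)
proof (induction l rule: dec_induct)
  case (step l)
  have "f (Suc l) - f l \<in> ideal_pow a k"
    using assms(1) ideal_pow_antimono[OF step(1)] by (auto simp: adic_class_in_completion_iff)
  then have "(f (Suc l) - f l) + (f l - f k) \<in> ideal_pow a k"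
    using step(3) by (rule ideal_add[OF is_ideal_ideal_pow])
  then show ?case by simp
qed (simp add: ideal_zero)

lemma comp_add_adic_class:
  "comp_add (adic_class a f) (adic_class a g) = adic_class a (\<lambda>n. f n + g n)"
proof (rule ext, intro equalityI subsetI)
  fix n z assume "z \<in> comp_add (adic_class a f) (adic_class a g) n"
  then obtain x y where "z = x + y" "x - f n \<in> ideal_pow a n" "y - g n \<in> ideal_pow a n"
    unfolding comp_add_def by (auto simp: adic_class_mem_iff)
  moreover have "(x - f n) + (y - g n) \<in> ideal_pow a n"
    using calculation(2,3) by (rule ideal_add[OF is_ideal_ideal_pow])
  ultimately show "z \<in> adic_class a (\<lambda>n. f n + g n) n"
    by (simp add: adic_class_mem_iff algebra_simps)
next
  fix n z assume "z \<in> adic_class a (\<lambda>n. f n + g n) n"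
  then have "z - g n \<in> adic_class a f n"
    by (simp add: adic_class_mem_iff algebra_simps)
  moreover have "z = (z - g n) + g n" by simp
  ultimately show "z \<in> comp_add (adic_class a f) (adic_class a g) n"
    unfolding comp_add_def using adic_class_self by blast
qed

lemma comp_scale_adic_class: "comp_scale a r (adic_class a f) = adic_class a (\<lambda>n. r * f n)"
proof (rule ext, intro equalityI subsetI)
  fix n z assume "z \<in> comp_scale a r (adic_class a f) n"
  then obtain x w where "z = r * x + w" "x - f n \<in> ideal_pow a n" "w \<in> ideal_pow a n"
    unfolding comp_scale_def adic_sub_ring by (auto simp: adic_class_mem_iff)
  moreover have "r * (x - f n) + w \<in> ideal_pow a n"
    using calculation by (simp add: ideal_add ideal_mult_left)
  ultimately show "z \<in> adic_class a (\<lambda>n. r * f n) n"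
    by (simp add: adic_class_mem_iff algebra_simps)
next
  fix n z assume "z \<in> adic_class a (\<lambda>n. r * f n) n"
  then have "z - r * f n \<in> ideal_pow a n" by (simp add: adic_class_mem_iff)
  moreover have "z = r * f n + (z - r * f n)" by simp
  ultimately show "z \<in> comp_scale a r (adic_class a f) n"
    unfolding comp_scale_def adic_sub_ring using adic_class_self by blast
qed

lemma comp_one_eq_adic_class: "comp_one a = adic_class a (\<lambda>_. 1)"
  by (simp add: comp_one_def adic_class_def adic_sub_ring)

lemma adic_class_const_in_completion: "adic_class a (\<lambda>_. x) \<in> completion a"
  by (simp add: adic_class_in_completion_iff ideal_zero)

lemma comp_one_in_completion: "comp_one a \<in> completion a"
  by (simp add: comp_one_eq_adic_class adic_class_const_in_completion)

lemma comp_add_in_completion: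
  assumes "c \<in> completion a" "d \<in> completion a"
  shows "comp_add c d \<in> completion a"
proof -
  obtain f g where fg: "c = adic_class a f" "d = adic_class a g"
    using assms completion_obtain_adic_class by metis
  have "(f (Suc n) - f n) + (g (Suc n) - g n) \<in> ideal_pow a n" for n
    using assms fg by (intro ideal_add) (auto simp: adic_class_in_completion_iff)
  then show ?thesis
    by (simp add: fg comp_add_adic_class adic_class_in_completion_iff algebra_simps)
qed

lemma comp_scale_in_completion:
  assumes "c \<in> completion a"
  shows "comp_scale a r c \<in> completion a"
proof -
  obtain f where f: "c = adic_class a f"
    using assms completion_obtain_adic_class by metis
  have "r * (f (Suc n) - f n) \<in> ideal_pow a n" for n
    using assms f by (intro ideal_mult_left) (auto simp: adic_class_in_completion_iff)
  then show ?thesis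
    by (simp add: f comp_scale_adic_class adic_class_in_completion_iff right_diff_distrib)
qed

text \<open>The increments \<open>f (n + j + 1) - f (n + j) \<in> a\<^sup>n\<^sup>+\<^sup>j\<close> are split along the generators
  \<open>G\<close> of \<open>a\<^sup>n\<close> with coefficients in \<open>a\<^sup>j\<close>, and the coefficients are summed.\<close>
lemma completion_ideal_pow_decomp:
  assumes G: "finite G" "ideal_pow a n = ideal_gen G"
    and f: "adic_class a f \<in> completion a" and fn: "f n \<in> ideal_pow a n"
  obtains B where "\<And>g. adic_class a (B g) \<in> completion a"
    "adic_class a f = adic_class a (\<lambda>k. \<Sum>g\<in>G. g * B g k)"
proof -
  obtain \<gamma> where \<gamma>: "f n = (\<Sum>g\<in>G. \<gamma> g * g)"
    using ideal_gen_finite[OF G(1)] fn G(2) by metis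
  have "\<forall>j. \<exists>\<beta>. (\<forall>g. \<beta> g \<in> ideal_pow a j) \<and> f (Suc (n + j)) - f (n + j) = (\<Sum>g\<in>G. g * \<beta> g)"
    using f G by (auto simp: adic_class_in_completion_iff intro: ideal_pow_add_decomp)
  then obtain \<beta> where \<beta>: "\<And>j g. \<beta> j g \<in> ideal_pow a j"
    "\<And>j. f (Suc (n + j)) - f (n + j) = (\<Sum>g\<in>G. g * \<beta> j g)" by metis
  define B where "B g j = \<gamma> g + (\<Sum>i<j. \<beta> i g)" for g j
  show thesis
  proof
    show "adic_class a (B g) \<in> completion a" for g
      by (simp add: adic_class_in_completion_iff B_def \<beta>(1))
    have B_sum: "(\<Sum>g\<in>G. g * B g j) = f (n + j)" for j
    proof (induction j)
      case 0
      then show ?case using \<gamma> by (simp add: B_def mult.commute)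
    next
      case (Suc j)
      have "(\<Sum>g\<in>G. g * B g (Suc j)) = (\<Sum>g\<in>G. g * B g j) + (\<Sum>g\<in>G. g * \<beta> j g)"
        by (simp add: B_def distrib_left sum.distrib)
      then show ?case using Suc \<beta>(2)[of j] by (simp add: algebra_simps)
    qed
    have tail: "f (n + k) - f k \<in> ideal_pow a k" for k
      by (rule adic_class_cauchy[OF f]) simp
    show "adic_class a f = adic_class a (\<lambda>k. \<Sum>g\<in>G. g * B g k)"
      unfolding B_sum by (intro ext adic_class_eq[symmetric]) (simp add: tail)
  qed
qed

section \<open>The action of the completion on \<open>C\<^sub>a(M)\<close>\<close>

context noetherian_adic_module
begin

definition is_hat_act :: "(nat \<Rightarrow> 'a set) \<Rightarrow> 'b \<Rightarrow> 'b \<Rightarrow> bool" where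
  "is_hat_act c m y \<longleftrightarrow> y \<in> Ca \<and> (\<forall>n. \<forall>r\<in>c n. y - r *s m \<in> apow n Ca)"

lemma is_hat_act_unique:
  assumes c: "c \<in> completion a" and y: "is_hat_act c m y" and y': "is_hat_act c m y'"
  shows "y = y'"
proof -
  obtain f where f: "c = adic_class a f" using completion_obtain_adic_class[OF c] by blast
  have "y - y' \<in> apow n Ca" for n
  proof -
    have "y - f n *s m \<in> apow n Ca" "y' - f n *s m \<in> apow n Ca"
      using y y' adic_class_self[of f n a] unfolding is_hat_act_def f by blast+
    from adic_sub_diff[OF this] show ?thesis by simp
  qed
  then show ?thesis using krull_intersection[OF subspace_max_complete, of "y - y'"] by simp
qed

lemma is_hat_act_exists:
  assumes c: "c \<in> completion a" and m: "m \<in> Ca"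
  shows "\<exists>y. is_hat_act c m y"
proof -
  obtain f where f: "c = adic_class a f" using completion_obtain_adic_class[OF c] by blast
  have "\<exists>y\<in>Ca. \<forall>n. y - f n *s m \<in> apow n Ca"
  proof (rule adically_complete_limit[OF adically_complete_max_complete])
    show "f n *s m \<in> Ca" for n using m subspace_scale[OF subspace_max_complete] by blast
    have "(f (Suc n) - f n) *s m \<in> apow n Ca" for n
      using c f m by (intro adic_sub_mem) (auto simp: adic_class_in_completion_iff)
    then show "f (Suc n) *s m - f n *s m \<in> apow n Ca" for n
      by (simp add: scale_left_diff_distrib)
  qed
  then obtain y where y: "y \<in> Ca" "\<And>n. y - f n *s m \<in> apow n Ca" by blast
  have "y - r *s m \<in> apow n Ca" if "r \<in> c n" for n r
  proof -
    have "(r - f n) *s m \<in> apow n Ca"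
      using that m unfolding f by (intro adic_sub_mem) (simp_all add: adic_class_mem_iff)
    from adic_sub_diff[OF y(2) this] show ?thesis by (simp add: scale_left_diff_distrib)
  qed
  then show ?thesis using y(1) unfolding is_hat_act_def by blast
qed

lemma hat_act_eq:
  assumes "c \<in> completion a" and "is_hat_act c m y"
  shows "hat_act scale a Ca c m = y"
  unfolding hat_act_def is_hat_act_def[symmetric]
  using assms is_hat_act_unique by blast

lemma is_hat_act_hat_act:
  assumes "c \<in> completion a" and "m \<in> Ca"
  shows "is_hat_act c m (hat_act scale a Ca c m)"
  using is_hat_act_exists[OF assms] hat_act_eq[OF assms(1)] by metis

lemma is_hat_act_comp_add:
  assumes y: "is_hat_act c m y" and z: "is_hat_act d m z"
  shows "is_hat_act (comp_add c d) m (y + z)"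
  unfolding is_hat_act_def
proof (intro conjI allI ballI)
  show "y + z \<in> Ca"
    using y z subspace_add[OF subspace_max_complete] unfolding is_hat_act_def by blast
  fix n r assume "r \<in> comp_add c d n"
  then obtain x w where r: "r = x + w" "x \<in> c n" "w \<in> d n" unfolding comp_add_def by blast
  have "(y - x *s m) + (z - w *s m) \<in> apow n Ca"
    using y z r unfolding is_hat_act_def by (intro adic_sub_add) auto
  then show "y + z - r *s m \<in> apow n Ca" using r by (simp add: algebra_simps)
qed

lemma is_hat_act_comp_scale:
  assumes y: "is_hat_act c m y" and m: "m \<in> Ca"
  shows "is_hat_act (comp_scale a r c) m (r *s y)"
  unfolding is_hat_act_def
proof (intro conjI allI ballI)
  show "r *s y \<in> Ca"
    using y subspace_scale[OF subspace_max_complete] unfolding is_hat_act_def by blast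
  fix n s assume "s \<in> comp_scale a r c n"
  then obtain x w where s: "s = r * x + w" "x \<in> c n" "w \<in> ideal_pow a n"
    unfolding comp_scale_def adic_sub_ring by blast
  have "r *s (y - x *s m) \<in> apow n Ca"
    using y s(2) unfolding is_hat_act_def by (intro adic_sub_scale) auto
  moreover have "w *s m \<in> apow n Ca" using s(3) m by (rule adic_sub_mem)
  ultimately have "r *s (y - x *s m) - w *s m \<in> apow n Ca" by (rule adic_sub_diff)
  then show "r *s y - s *s m \<in> apow n Ca" using s by (simp add: algebra_simps)
qed

lemma is_hat_act_add:
  assumes y: "is_hat_act c m y" and y': "is_hat_act c m' y'"
  shows "is_hat_act c (m + m') (y + y')"
  unfolding is_hat_act_def
proof (intro conjI allI ballI)
  show "y + y' \<in> Ca"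
    using y y' subspace_add[OF subspace_max_complete] unfolding is_hat_act_def by blast
  fix n r assume "r \<in> c n"
  then have "(y - r *s m) + (y' - r *s m') \<in> apow n Ca"
    using y y' unfolding is_hat_act_def by (intro adic_sub_add) auto
  then show "y + y' - r *s (m + m') \<in> apow n Ca" by (simp add: algebra_simps)
qed

lemma is_hat_act_scale:
  assumes y: "is_hat_act c m y"
  shows "is_hat_act c (r *s m) (r *s y)"
  unfolding is_hat_act_def
proof (intro conjI allI ballI)
  show "r *s y \<in> Ca"
    using y subspace_scale[OF subspace_max_complete] unfolding is_hat_act_def by blast
  fix n s assume "s \<in> c n"
  then have "r *s (y - s *s m) \<in> apow n Ca"
    using y unfolding is_hat_act_def by (intro adic_sub_scale) auto
  then show "r *s y - s *s (r *s m) \<in> apow n Ca" by (simp add: algebra_simps mult.commute)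
qed

lemma is_hat_act_comp_one:
  assumes m: "m \<in> Ca"
  shows "is_hat_act (comp_one a) m m"
  unfolding is_hat_act_def
proof (intro conjI m allI ballI)
  fix n r assume "r \<in> comp_one a n"
  then have "(r - 1) *s m \<in> apow n Ca"
    using m unfolding comp_one_eq_adic_class by (intro adic_sub_mem) (simp_all add: adic_class_mem_iff)
  from adic_sub_diff[OF adic_sub_zero this]
  show "m - r *s m \<in> apow n Ca" by (simp add: scale_left_diff_distrib)
qed

lemma map_f_eq: "c \<in> completion a \<Longrightarrow> is_hat_act c m y \<Longrightarrow> map_f scale a m c = y"
  by (simp add: map_f_def hat_act_eq)

lemma map_f_outside: "c \<notin> completion a \<Longrightarrow> map_f scale a m c = 0"
  by (simp add: map_f_def)

lemma is_hat_act_map_f: "c \<in> completion a \<Longrightarrow> m \<in> Ca \<Longrightarrow> is_hat_act c m (map_f scale a m c)"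
  by (simp add: map_f_def is_hat_act_hat_act)

lemma map_f_in_hom_completion:
  assumes m: "m \<in> Ca"
  shows "map_f scale a m \<in> hom_completion scale a"
  unfolding hom_completion_def
proof (intro CollectI conjI ballI allI impI)
  fix c d assume c: "c \<in> completion a" and d: "d \<in> completion a"
  show "map_f scale a m (comp_add c d) = map_f scale a m c + map_f scale a m d"
    by (rule map_f_eq[OF comp_add_in_completion[OF c d]
          is_hat_act_comp_add[OF is_hat_act_map_f[OF c m] is_hat_act_map_f[OF d m]]])
  show "map_f scale a m (comp_scale a r c) = r *s map_f scale a m c" for r
    by (rule map_f_eq[OF comp_scale_in_completion[OF c]
          is_hat_act_comp_scale[OF is_hat_act_map_f[OF c m] m]])
qed (rule map_f_outside)

lemma map_e_map_f: "m \<in> Ca \<Longrightarrow> map_e a (map_f scale a m) = m"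
  by (simp add: map_e_def map_f_eq comp_one_in_completion is_hat_act_comp_one)

lemma map_f_add:
  assumes m: "m \<in> Ca" and m': "m' \<in> Ca"
  shows "map_f scale a (m + m') = (\<lambda>c. map_f scale a m c + map_f scale a m' c)"
proof
  fix c
  show "map_f scale a (m + m') c = map_f scale a m c + map_f scale a m' c"
  proof (cases "c \<in> completion a")
    case c: True
    show ?thesis
      by (rule map_f_eq[OF c is_hat_act_add[OF is_hat_act_map_f[OF c m] is_hat_act_map_f[OF c m']]])
  qed (simp add: map_f_outside)
qed

lemma map_f_scale:
  assumes m: "m \<in> Ca"
  shows "map_f scale a (r *s m) = (\<lambda>c. r *s map_f scale a m c)"
proof
  fix c
  show "map_f scale a (r *s m) c = r *s map_f scale a m c"
  proof (cases "c \<in> completion a")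
    case c: True
    show ?thesis by (rule map_f_eq[OF c is_hat_act_scale[OF is_hat_act_map_f[OF c m]]])
  qed (simp add: map_f_outside)
qed

end

section \<open>Homomorphisms from the completion\<close>

context noetherian_adic_module
begin

lemma hom_completion_add:
  "\<phi> \<in> hom_completion scale a \<Longrightarrow> c \<in> completion a \<Longrightarrow> d \<in> completion a \<Longrightarrow>
    \<phi> (comp_add c d) = \<phi> c + \<phi> d"
  unfolding hom_completion_def by blast

lemma hom_completion_scale:
  "\<phi> \<in> hom_completion scale a \<Longrightarrow> c \<in> completion a \<Longrightarrow> \<phi> (comp_scale a r c) = r *s \<phi> c"
  unfolding hom_completion_def by blast

lemma hom_completion_outside:
  "\<phi> \<in> hom_completion scale a \<Longrightarrow> c \<notin> completion a \<Longrightarrow> \<phi> c = 0"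
  unfolding hom_completion_def by blast

lemma hom_completion_zero:
  assumes "\<phi> \<in> hom_completion scale a"
  shows "\<phi> (adic_class a (\<lambda>_. 0)) = 0"
proof -
  have "adic_class a (\<lambda>_. 0) = comp_scale a 0 (comp_one a)"
    by (simp add: comp_one_eq_adic_class comp_scale_adic_class)
  then show ?thesis using hom_completion_scale[OF assms comp_one_in_completion] by simp
qed

lemma hom_completion_sum:
  assumes \<phi>: "\<phi> \<in> hom_completion scale a" and G: "finite G"
    and B: "\<And>g. g \<in> G \<Longrightarrow> adic_class a (B g) \<in> completion a"
  shows "adic_class a (\<lambda>k. \<Sum>g\<in>G. g * B g k) \<in> completion a \<and>
    \<phi> (adic_class a (\<lambda>k. \<Sum>g\<in>G. g * B g k)) = (\<Sum>g\<in>G. g *s \<phi> (adic_class a (B g)))"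
  using G B
proof (induction G rule: finite_induct)
  case empty
  then show ?case using hom_completion_zero[OF \<phi>] adic_class_const_in_completion by simp
next
  case (insert g G)
  let ?S = "adic_class a (\<lambda>k. \<Sum>g\<in>G. g * B g k)"
  have Bg: "comp_scale a g (adic_class a (B g)) \<in> completion a"
    using insert.prems by (simp add: comp_scale_in_completion)
  have IH: "?S \<in> completion a" "\<phi> ?S = (\<Sum>g\<in>G. g *s \<phi> (adic_class a (B g)))"
    using insert by auto
  have "adic_class a (\<lambda>k. \<Sum>g\<in>insert g G. g * B g k) = comp_add (comp_scale a g (adic_class a (B g))) ?S"
    using insert.hyps by (simp add: comp_scale_adic_class comp_add_adic_class)
  then show ?case
    using comp_add_in_completion[OF Bg IH(1)] hom_completion_add[OF \<phi> Bg IH(1)]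
      hom_completion_scale[OF \<phi>] insert IH(2) by simp
qed

text \<open>Since \<open>\<phi>\<close> is only \<open>R\<close>-linear, \<open>c - r \<cdot> 1\<close> is first written as a combination of the
  generators of \<open>a\<^sup>n\<close> with coefficients in the completion.\<close>
lemma hom_completion_approx:
  assumes \<phi>: "\<phi> \<in> hom_completion scale a" and c: "c \<in> completion a" and r: "r \<in> c n"
  shows "\<phi> c - r *s \<phi> (comp_one a) \<in> apow n (\<phi> ` completion a)"
proof -
  obtain f where f: "c = adic_class a f" using completion_obtain_adic_class[OF c] by blast
  define e where "e = comp_add c (comp_scale a (- r) (comp_one a))"
  have e_in: "e \<in> completion a"
    unfolding e_def by (intro comp_add_in_completion c comp_scale_in_completion comp_one_in_completion)
  have \<phi>_e: "\<phi> e = \<phi> c - r *s \<phi> (comp_one a)"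
    unfolding e_def
    using hom_completion_add[OF \<phi> c comp_scale_in_completion[OF comp_one_in_completion]]
      hom_completion_scale[OF \<phi> comp_one_in_completion] by simp
  have e_eq: "e = adic_class a (\<lambda>k. f k - r)"
    unfolding e_def f by (simp add: comp_one_eq_adic_class comp_scale_adic_class comp_add_adic_class)
  obtain G where G: "finite G" "ideal_pow a n = ideal_gen G"
    using noetherian is_ideal_ideal_pow unfolding noetherian_ring_def by meson
  have "f n - r \<in> ideal_pow a n"
    using r ideal_diff[OF is_ideal_ideal_pow ideal_zero[OF is_ideal_ideal_pow]]
    unfolding f by (metis adic_class_mem_iff minus_diff_eq diff_0)
  then obtain B where B: "\<And>g. adic_class a (B g) \<in> completion a"
    "e = adic_class a (\<lambda>k. \<Sum>g\<in>G. g * B g k)"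
    using completion_ideal_pow_decomp[OF G, of "\<lambda>k. f k - r"] e_in e_eq by metis
  have "\<phi> e = (\<Sum>g\<in>G. g *s \<phi> (adic_class a (B g)))"
    using hom_completion_sum[OF \<phi> G(1)] B by simp
  also have "\<dots> \<in> apow n (\<phi> ` completion a)"
    using G ideal_gen_superset B(1)
    by (intro subspace_sum[OF adic_sub_subspace] adic_sub_mem) auto
  finally show ?thesis unfolding \<phi>_e .
qed

lemma subspace_hom_completion_image:
  assumes \<phi>: "\<phi> \<in> hom_completion scale a"
  shows "subspace (\<phi> ` completion a)"
proof (rule subspaceI)
  show "0 \<in> \<phi> ` completion a"
    using adic_class_const_in_completion[of a 0] hom_completion_zero[OF \<phi>]
    by (metis image_eqI)
next
  fix x y assume "x \<in> \<phi> ` completion a" "y \<in> \<phi> ` completion a"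
  then obtain c d where c: "c \<in> completion a" "x = \<phi> c" and d: "d \<in> completion a" "y = \<phi> d"
    by blast
  show "x + y \<in> \<phi> ` completion a"
    using hom_completion_add[OF \<phi> c(1) d(1)] comp_add_in_completion[OF c(1) d(1)] c(2) d(2)
    by (metis rev_image_eqI)
next
  fix r x assume "x \<in> \<phi> ` completion a"
  then obtain c where c: "c \<in> completion a" "x = \<phi> c" by blast
  show "r *s x \<in> \<phi> ` completion a"
    using hom_completion_scale[OF \<phi> c(1)] comp_scale_in_completion[OF c(1)] c(2)
    by (metis rev_image_eqI)
qed

lemma hom_completion_image_eq:
  assumes \<phi>: "\<phi> \<in> hom_completion scale a"
  shows "\<phi> ` completion a = span {\<phi> (comp_one a)}"
proof -
  let ?x = "\<phi> (comp_one a)"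
  have I: "subspace (\<phi> ` completion a)" by (rule subspace_hom_completion_image[OF \<phi>])
  obtain T where T: "finite T" "\<phi> ` completion a = span T"
    using subspace_finitely_generated[OF I] by meson
  have "span T \<subseteq> span {?x} + apow 1 (span T)"
  proof
    fix v assume "v \<in> span T"
    then obtain c where c: "c \<in> completion a" "v = \<phi> c" using T(2) by blast
    obtain f where f: "c = adic_class a f" using completion_obtain_adic_class[OF c(1)] by blast
    have "v - f 1 *s ?x \<in> apow 1 (span T)"
      using hom_completion_approx[OF \<phi> c(1), of "f 1"] adic_class_self[of f 1 a] c(2) f T(2)
      by simp
    moreover have "f 1 *s ?x \<in> span {?x}" by (intro span_scale span_base) simp
    ultimately show "v \<in> span {?x} + apow 1 (span T)"
      by (metis add.commute diff_add_cancel set_plus_intro)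
  qed
  then have "span T \<subseteq> span {?x}"
    using nakayama[OF ideal jacobson T(1) subspace_span] by blast
  moreover have "span {?x} \<subseteq> span T"
    using comp_one_in_completion T(2) by (intro span_minimal) auto
  ultimately show ?thesis using T(2) by blast
qed

lemma adically_complete_hom_completion_image:
  assumes \<phi>: "\<phi> \<in> hom_completion scale a"
  shows "adically_complete scale a (\<phi> ` completion a)"
proof -
  let ?x = "\<phi> (comp_one a)"
  have image: "\<phi> ` completion a = span {?x}" by (rule hom_completion_image_eq[OF \<phi>])
  show ?thesis
    unfolding image
  proof (rule adically_completeI[OF subspace_span])
    fix y assume y: "\<And>n. y n \<in> span {?x}" and cauchy: "\<And>n. y (Suc n) - y n \<in> apow n (span {?x})"
    obtain s where s: "y 0 = s *s ?x" using y[of 0] by (auto simp: span_singleton)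
    obtain \<alpha> where \<alpha>: "\<And>n. \<alpha> n \<in> ideal_pow a n" "\<And>n. y (Suc n) - y n = \<alpha> n *s ?x"
      using adic_sub_span_singleton[OF cauchy] by metis
    define t where "t n = s + (\<Sum>i<n. \<alpha> i)" for n
    have t: "t n *s ?x = y n" for n
    proof (induction n)
      case (Suc n)
      then show ?case using \<alpha>(2)[of n] by (simp add: t_def scale_left_distrib algebra_simps)
    qed (simp add: t_def s)
    have c: "adic_class a t \<in> completion a"
      by (simp add: adic_class_in_completion_iff t_def \<alpha>(1))
    have "\<phi> (adic_class a t) - y n \<in> apow n (span {?x})" for n
      using hom_completion_approx[OF \<phi> c adic_class_self[of t n a]] t image by simp
    moreover have "\<phi> (adic_class a t) \<in> span {?x}" using c image by blast
    ultimately show "\<exists>z\<in>span {?x}. \<forall>n. z - y n \<in> apow n (span {?x})" by blast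
  qed
qed

lemma hom_completion_image_subset: "\<phi> \<in> hom_completion scale a \<Longrightarrow> \<phi> ` completion a \<subseteq> Ca"
  by (rule subset_max_complete[OF adically_complete_hom_completion_image])

lemma map_e_in_max_complete: "\<phi> \<in> hom_completion scale a \<Longrightarrow> map_e a \<phi> \<in> Ca"
  using hom_completion_image_subset comp_one_in_completion by (auto simp: map_e_def)

lemma map_f_map_e:
  assumes \<phi>: "\<phi> \<in> hom_completion scale a"
  shows "map_f scale a (map_e a \<phi>) = \<phi>"
proof
  fix c
  show "map_f scale a (map_e a \<phi>) c = \<phi> c"
  proof (cases "c \<in> completion a")
    case c: True
    have "is_hat_act c (\<phi> (comp_one a)) (\<phi> c)"
      unfolding is_hat_act_def
      using c hom_completion_image_subset[OF \<phi>] hom_completion_approx[OF \<phi> c]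
        adic_sub_mono[OF hom_completion_image_subset[OF \<phi>]] by blast
    then show ?thesis using c by (simp add: map_e_def map_f_eq)
  qed (simp add: map_f_outside hom_completion_outside[OF \<phi>])
qed

lemma map_f_sum:
  assumes "finite T" "T \<subseteq> Ca"
  shows "map_f scale a (\<Sum>t\<in>T. u t *s t) = (\<lambda>c. \<Sum>t\<in>T. u t *s map_f scale a t c)"
  using assms
proof (induction T rule: finite_induct)
  case empty
  show ?case using map_f_scale[OF subspace_0[OF subspace_max_complete], of 0] by simp
next
  case (insert t T)
  have "u t *s t \<in> Ca" "(\<Sum>t\<in>T. u t *s t) \<in> Ca"
    using insert.prems subspace_max_complete
    by (auto intro!: subspace_scale subspace_sum)
  then show ?case
    using insert map_f_add map_f_scale by simp
qed

lemma hom_completion_finitely_generated: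
  "\<exists>\<Phi>. finite \<Phi> \<and> \<Phi> \<subseteq> hom_completion scale a \<and>
     (\<forall>\<phi>\<in>hom_completion scale a. \<exists>u. \<phi> = (\<lambda>c. \<Sum>\<psi>\<in>\<Phi>. u \<psi> *s \<psi> c))"
proof -
  obtain T where T: "finite T" "Ca = span T"
    using subspace_finitely_generated[OF subspace_max_complete] by meson
  have TC: "T \<subseteq> Ca" using T(2) span_superset by blast
  have inj: "inj_on (map_f scale a) T"
    using map_e_map_f TC by (metis inj_on_inverseI subsetD)
  show ?thesis
  proof (intro exI[of _ "map_f scale a ` T"] conjI ballI)
    show "finite (map_f scale a ` T)" using T(1) by simp
    show "map_f scale a ` T \<subseteq> hom_completion scale a" using TC map_f_in_hom_completion by blast
    fix \<phi> assume \<phi>: "\<phi> \<in> hom_completion scale a"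
    obtain u where u: "map_e a \<phi> = (\<Sum>t\<in>T. u t *s t)"
      using map_e_in_max_complete[OF \<phi>] T span_finite by auto
    have "\<phi> = map_f scale a (map_e a \<phi>)" by (simp add: map_f_map_e[OF \<phi>])
    also have "\<dots> = (\<lambda>c. \<Sum>t\<in>T. u t *s map_f scale a t c)"
      unfolding u by (rule map_f_sum[OF T(1) TC])
    also have "\<dots> = (\<lambda>c. \<Sum>\<psi>\<in>map_f scale a ` T. u (map_e a \<psi>) *s \<psi> c)"
      using TC map_e_map_f by (simp add: sum.reindex[OF inj] subset_iff cong: sum.cong)
    finally show "\<exists>u. \<phi> = (\<lambda>c. \<Sum>\<psi>\<in>map_f scale a ` T. u \<psi> *s \<psi> c)"
      by (rule exI[of _ "\<lambda>\<psi>. u (map_e a \<psi>)"])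
  qed
qed

end

theorem proposition2p5:
  fixes scale :: "'r::comm_ring_1 \<Rightarrow> 'm::ab_group_add \<Rightarrow> 'm"
    and a :: "'r set"
  assumes "noetherian_ring TYPE('r)"
    and "is_ideal a" and "a \<subseteq> jacobson_radical"
    and "module scale" and "fin_gen_module scale"
  shows "(\<forall>m\<in>max_complete scale a. map_f scale a m \<in> hom_completion scale a)
    \<and> (\<forall>\<phi>\<in>hom_completion scale a. map_e a \<phi> \<in> max_complete scale a)
    \<and> (\<forall>m\<in>max_complete scale a. map_e a (map_f scale a m) = m)
    \<and> (\<forall>\<phi>\<in>hom_completion scale a. map_f scale a (map_e a \<phi>) = \<phi>)
    \<and> (\<forall>m\<in>max_complete scale a. \<forall>m'\<in>max_complete scale a.
         map_f scale a (m + m') = (\<lambda>c. map_f scale a m c + map_f scale a m' c))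
    \<and> (\<forall>r. \<forall>m\<in>max_complete scale a. map_f scale a (scale r m) = (\<lambda>c. scale r (map_f scale a m c)))
    \<and> (\<forall>\<phi>\<in>hom_completion scale a. \<forall>\<psi>\<in>hom_completion scale a.
         map_e a (\<lambda>c. \<phi> c + \<psi> c) = map_e a \<phi> + map_e a \<psi>)
    \<and> (\<forall>r. \<forall>\<phi>\<in>hom_completion scale a. map_e a (\<lambda>c. scale r (\<phi> c)) = scale r (map_e a \<phi>))
    \<and> (\<exists>\<Phi>. finite \<Phi> \<and> \<Phi> \<subseteq> hom_completion scale a \<and>
         (\<forall>\<phi>\<in>hom_completion scale a. \<exists>u. \<phi> = (\<lambda>c. \<Sum>\<psi>\<in>\<Phi>. scale (u \<psi>) (\<psi> c))))"
proof -
  interpret noetherian_adic_module scale a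
    using assms by (simp add: noetherian_adic_module_def noetherian_adic_module_axioms_def)
  show ?thesis
    using map_f_in_hom_completion map_e_in_max_complete map_e_map_f map_f_map_e
      map_f_add map_f_scale hom_completion_finitely_generated
    by (simp add: map_e_def)
qed

end
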